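(* Let $D\subseteq\mathbb{R}$ be an open interval, let $f:D\to\mathbb{R}$ be a sufficiently differentiable function, and let $\alpha\in D$ be a simple root of $f(x)=0$ (i.e. $f(\alpha)=0$, $f'(\alpha)\neq 0$). Fix $\kappa\in\mathbb{R}$, $\kappa\neq 0$, and let $G(t_1,t_2)$ and $H(s_1,s_2)$ be real-valued functions of two real variables, sufficiently differentiable near $(0,0)$. Consider the iteration, starting from $x_0$, $$ \begin{aligned} w_n &= x_n-\kappa f(x_n),\\ y_n &= x_n-\kappa\,\frac{f(x_n)^2}{f(x_n)-f(w_n)},\\ z_n &= y_n-\kappa\,\frac{f(y_n)\,f(x_n)}{f(x_n)-f(w_n)}\;G(t_1,t_2),\\ x_{n+1} &= z_n-\frac{f(z_n)}{\psi_n}\;H(s_1,s_2), \end{aligned} $$ where $t_1=\frac{f(y_n)}{f(x_n)}$, $t_2=\frac{f(y_n)}{f(w_n)}$, $s_1=\frac{f(z_n)}{f(x_n)}$, $s_2=\frac{f(z_n)}{f(w_n)}$, and $$ \psi_n=\frac{b(b-c)}{(a-b)(a-c)}\,\frac{v_1}{a}+\frac{-3b^2+2bc+2ab-ac}{(a-b)(b-c)}\,\frac{v_2}{b}+\frac{b(b-a)}{(a-c)(b-c)}\,\frac{v_3}{c}, $$ with $v_1=f(x_n)-f(y_n)$, $v_2=f(z_n)-f(y_n)$, $v_3=f(w_n)-f(y_n)$, $a=x_n-y_n$, $b=z_n-y_n$, $c=w_n-y_n$. If $x_0$ is chosen sufficiently close to $\alpha$, then the iterates $x_n$ converge to $\alpha$.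 Moreover, if $$ G(0,0)=1,\quad \frac{\partial G}{\partial t_1}(0,0)=1,\quad \frac{\partial G}{\partial t_2}(0,0)=1,\quad H(0,0)=1,\quad \frac{\partial H}{\partial s_1}(0,0)=0,\quad \frac{\partial H}{\partial s_2}(0,0)=0, $$ and the second partial derivatives $\frac{\partial^2 G}{\partial t_1^2},\frac{\partial^2 G}{\partial t_2^2},\frac{\partial^2 G}{\partial t_1\partial t_2},\frac{\partial^2 H}{\partial s_1^2},\frac{\partial^2 H}{\partial s_2^2},\frac{\partial^2 H}{\partial s_1\partial s_2}$ are bounded at $(0,0)$, then this iterative scheme has order of convergence at least eight, i.e. $|x_{n+1}-\alpha|=O(|x_n-\alpha|^8)$.
   Context: The quantity $\psi_n$ is the derivative at $z_n$ of the cubic polynomial interpolating $f$ at the four points $x_n,w_n,y_n,z_n$; it serves as a derivative-free approximation of $f'(z_n)$. Order of convergence $p$ means $|x_{n+1}-\alpha|\le C|x_n-\alpha|^p$ for some constant $C$ and all $n$ large enough. *)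

theory Defs
  imports "HOL-Analysis.Analysis"
begin

text \<open>f is infinitely differentiable on D (reading of "sufficiently differentiable").\<close>
definition smooth_real_on :: "real set \<Rightarrow> (real \<Rightarrow> real) \<Rightarrow> bool" where
  "smooth_real_on D f \<longleftrightarrow>
     (\<forall>k. \<forall>x\<in>D. ((deriv ^^ k) f has_real_derivative (deriv ^^ Suc k) f x) (at x))"

fun C2k :: "nat \<Rightarrow> (real \<times> real) set \<Rightarrow> (real \<times> real \<Rightarrow> real) \<Rightarrow> bool" where
  "C2k 0 U g = continuous_on U g"
| "C2k (Suc k) U g =
     (\<exists>g1 g2. (\<forall>p\<in>U. (g has_derivative (\<lambda>h. g1 p * fst h + g2 p * snd h)) (at p))
              \<and> C2k k U g1 \<and> C2k k U g2)"

definition smooth2_near0 :: "(real \<times> real \<Rightarrow> real) \<Rightarrow> bool" where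
  "smooth2_near0 g \<longleftrightarrow> (\<exists>U. open U \<and> (0,0) \<in> U \<and> (\<forall>k. C2k k U g))"

text \<open>The derivative-free approximation psi_n of f'(z_n).\<close>
definition psi :: "(real \<Rightarrow> real) \<Rightarrow> real \<Rightarrow> real \<Rightarrow> real \<Rightarrow> real \<Rightarrow> real" where
  "psi f x w y z =
     (let v1 = f x - f y; v2 = f z - f y; v3 = f w - f y;
          a = x - y; b = z - y; c = w - y
      in b * (b - c) / ((a - b) * (a - c)) * (v1 / a)
         + (- 3 * b^2 + 2 * b * c + 2 * a * b - a * c) / ((a - b) * (b - c)) * (v2 / b)
         + b * (b - a) / ((a - c) * (b - c)) * (v3 / c))"

definition step :: "real \<Rightarrow> (real \<Rightarrow> real) \<Rightarrow> (real \<times> real \<Rightarrow> real)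
                    \<Rightarrow> (real \<times> real \<Rightarrow> real) \<Rightarrow> real \<Rightarrow> real" where
  "step \<kappa> f G H x =
     (let w = x - \<kappa> * f x;
          y = x - \<kappa> * (f x)^2 / (f x - f w);
          z = y - \<kappa> * (f y * f x) / (f x - f w) * G (f y / f x, f y / f w)
      in z - f z / psi f x w y z * H (f z / f x, f z / f w))"

definition iterates :: "real \<Rightarrow> (real \<Rightarrow> real) \<Rightarrow> (real \<times> real \<Rightarrow> real)
                    \<Rightarrow> (real \<times> real \<Rightarrow> real) \<Rightarrow> real \<Rightarrow> nat \<Rightarrow> real" where
  "iterates \<kappa> f G H x0 n = (step \<kappa> f G H ^^ n) x0"

end

theory Submission
  imports Defs "HOL-Library.Landau_Symbols"
begin

text \<open>
  Write \<open>e = x - \<alpha>\<close> and \<open>e\<^sub>w = w - \<alpha> = O(e)\<close>; since \<open>\<kappa> \<noteq> 0\<close>, \<open>x - w\<close> is of exact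
  order \<open>e\<close>.  Taylor expansion of \<open>f\<close> about \<open>\<alpha>\<close> shows that the Steffensen-type step
  gives \<open>y - \<alpha> = (f''(\<alpha>)/(2 f'(\<alpha>))) e e\<^sub>w + O(e\<^sup>2 e\<^sub>w)\<close>.  The ratios \<open>t\<^sub>1, t\<^sub>2\<close> are of orders
  \<open>e\<^sub>w\<close> and \<open>e\<close>, and the conditions on \<open>G\<close> make its first-order part cancel the leading error
  of \<open>y\<close>, so \<open>z - \<alpha> = O(e\<^sup>3 e\<^sub>w) = O(e\<^sup>4)\<close>.  Since \<open>\<psi>\<close> is the derivative at \<open>z\<close> of the cubic
  interpolant through \<open>x, w, y, z\<close>, it is exact on cubics, and expanding \<open>f\<close> to third order
  about \<open>z\<close> gives \<open>\<psi> - f'(z) = O(e\<^sup>2 e\<^sub>w\<^sup>2) = O(e\<^sup>4)\<close>; the arguments \<open>s\<^sub>1, s\<^sub>2\<close> of \<open>H\<close> are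
  \<open>O(e\<^sup>2)\<close>, so \<open>H = 1 + O(e\<^sup>4)\<close>.  Combining, the last Newton-like step squares the error:
  \<open>x\<^sub>n\<^sub>+\<^sub>1 - \<alpha> = O((z - \<alpha>)(\<psi> - f'(z)) + (z - \<alpha>)\<^sup>2 + f(z)(1 - H)) = O(e\<^sup>8)\<close>.
  Without the conditions on \<open>G, H\<close> the same estimates still give \<open>x\<^sub>n\<^sub>+\<^sub>1 - \<alpha> = O(e\<^sup>2)\<close>,
  which yields local convergence.
\<close>

lemma bigo_tendsto_zero:
  fixes f g :: "'a \<Rightarrow> real"
  assumes "f \<in> O[F](g)" "(g \<longlongrightarrow> 0) F"
  shows "(f \<longlongrightarrow> 0) F"
proof -
  from assms(1) obtain c where c: "c > 0" "eventually (\<lambda>x. norm (f x) \<le> c * norm (g x)) F"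
    by (elim landau_o.bigE)
  have "((\<lambda>x. c * norm (g x)) \<longlongrightarrow> c * 0) F"
    by (intro tendsto_mult tendsto_const tendsto_norm_zero assms(2))
  then have "((\<lambda>x. c * norm (g x)) \<longlongrightarrow> 0) F" by simp
  from Lim_null_comparison[OF c(2) this] show ?thesis .
qed

lemma tendsto_imp_bigo_1: "((f::'a \<Rightarrow> real) \<longlongrightarrow> c) F \<Longrightarrow> f \<in> O[F](\<lambda>_. 1)"
  by (rule bigoI_tendsto[where c=c]) auto

lemma tendsto_zero_imp_smallo_1: "((f::'a \<Rightarrow> real) \<longlongrightarrow> 0) F \<Longrightarrow> f \<in> o[F](\<lambda>_. 1)"
  by (rule smalloI_tendsto) auto

lemma bigtheta_diff_smallo: "(g::'a \<Rightarrow> real) \<in> o[F](f) \<Longrightarrow> (\<lambda>x. f x - g x) \<in> \<Theta>[F](f)"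
  using landau_theta.diff_absorb2[of g F f] bigtheta_refl[of "\<lambda>x. f x - g x" F] by simp

lemma bigo_eventually_cong: "eventually (\<lambda>x. f x = g x) F \<Longrightarrow> g \<in> O[F](h) \<Longrightarrow> f \<in> O[F](h)"
  using landau_o.big.in_cong by blast

lemma bigo_eventually_cong_bound:
  "eventually (\<lambda>x. h x = h' x) F \<Longrightarrow> f \<in> O[F](h) \<Longrightarrow> f \<in> O[F](h')"
  using landau_o.big.cong by blast

lemma bigo_const_mult: "f \<in> O[F](g) \<Longrightarrow> (\<lambda>x. c * f x) \<in> O[F](g)"
  by (cases "c = 0") simp_all

lemma bigo_power_mono:
  fixes f :: "'a \<Rightarrow> real"
  assumes "(f \<longlongrightarrow> 0) F" "n \<le> m"
  shows "(\<lambda>x. f x ^ m) \<in> O[F](\<lambda>x. f x ^ n)"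
proof -
  have "((\<lambda>x. f x ^ (m - n)) \<longlongrightarrow> 0 ^ (m - n)) F" by (intro tendsto_power assms)
  then have "(\<lambda>x. f x ^ (m - n)) \<in> O[F](\<lambda>_. 1)" by (rule tendsto_imp_bigo_1)
  then have "(\<lambda>x. f x ^ n * f x ^ (m - n)) \<in> O[F](\<lambda>x. f x ^ n)"
    by (rule landau_o.big_1_mult[OF landau_o.big_refl])
  moreover have "\<And>x. f x ^ n * f x ^ (m - n) = f x ^ m" using assms(2)
    by (simp add: power_add[symmetric])
  ultimately show ?thesis by simp
qed

lemma bigo_divide_bigtheta:
  fixes f1 f2 g1 g2 :: "'a \<Rightarrow> real"
  assumes "f1 \<in> O[F](f2)" "g1 \<in> \<Theta>[F](g2)" "eventually (\<lambda>x. g2 x \<noteq> 0) F"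
  shows "(\<lambda>x. f1 x / g1 x) \<in> O[F](\<lambda>x. f2 x / g2 x)"
proof -
  have "eventually (\<lambda>x. g1 x \<noteq> 0) F" using assms(2,3) eventually_nonzero_bigtheta by blast
  moreover have "g2 \<in> \<Theta>[F](g1)" using assms(2) bigtheta_sym by blast
  then have "g2 \<in> O[F](g1)" by blast
  ultimately show ?thesis using assms by (intro landau_o.big.divide) auto
qed

lemma bigo_at_within_imp_local_bound:
  fixes u :: "real \<Rightarrow> real"
  assumes bigo: "u \<in> O[at a within S](\<lambda>x. (x - a) ^ k)"
    and outside: "eventually (\<lambda>x. x \<notin> S \<longrightarrow> \<bar>u x\<bar> \<le> C * \<bar>x - a\<bar> ^ k) (at a)"
    and "u a = 0"
  shows "\<exists>\<delta>>0. \<exists>C. \<forall>x. \<bar>x - a\<bar> < \<delta> \<longrightarrow> \<bar>u x\<bar> \<le> C * \<bar>x - a\<bar> ^ k"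
proof -
  from bigo obtain c where c: "c > 0"
    and inside: "eventually (\<lambda>x. \<bar>u x\<bar> \<le> c * \<bar>x - a\<bar> ^ k) (at a within S)"
    by (elim landau_o.bigE) (simp add: power_abs)
  have "eventually (\<lambda>x. \<bar>u x\<bar> \<le> max c C * \<bar>x - a\<bar> ^ k) (at a)"
    using inside outside unfolding eventually_at_filter
  proof eventually_elim
    case (elim x)
    have "c * \<bar>x - a\<bar> ^ k \<le> max c C * \<bar>x - a\<bar> ^ k" "C * \<bar>x - a\<bar> ^ k \<le> max c C * \<bar>x - a\<bar> ^ k"
      by (simp_all add: mult_right_mono)
    with elim show ?case by (cases "x \<in> S") (auto intro: order_trans)
  qed
  then obtain \<delta> where "\<delta> > 0" "\<And>x. x \<noteq> a \<Longrightarrow> dist x a < \<delta> \<Longrightarrow> \<bar>u x\<bar> \<le> max c C * \<bar>x - a\<bar> ^ k"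
    unfolding eventually_at by blast
  moreover have "0 \<le> max c C * \<bar>a - a\<bar> ^ k" using c by simp
  ultimately have "\<forall>x. \<bar>x - a\<bar> < \<delta> \<longrightarrow> \<bar>u x\<bar> \<le> max c C * \<bar>x - a\<bar> ^ k"
    using \<open>u a = 0\<close> by (metis abs_zero dist_real_def)
  with \<open>\<delta> > 0\<close> show ?thesis by blast
qed

lemma quadratic_bound_imp_local_convergence:
  fixes g :: "real \<Rightarrow> real"
  assumes "\<delta> > 0" and quadratic: "\<forall>x. \<bar>x - \<alpha>\<bar> < \<delta> \<longrightarrow> \<bar>g x - \<alpha>\<bar> \<le> C * \<bar>x - \<alpha>\<bar>^2"
  shows "\<exists>\<delta>'>0. \<forall>x0. \<bar>x0 - \<alpha>\<bar> < \<delta>' \<longrightarrow>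
           (\<lambda>n. (g ^^ n) x0) \<longlonglongrightarrow> \<alpha> \<and> (\<forall>n. \<bar>(g ^^ n) x0 - \<alpha>\<bar> \<le> \<bar>x0 - \<alpha>\<bar>)"
proof -
  define \<delta>' where "\<delta>' = min \<delta> (1 / (2 * (\<bar>C\<bar> + 1)))"
  have "\<delta>' > 0" using assms(1) by (auto simp: \<delta>'_def)
  have half: "\<bar>g x - \<alpha>\<bar> \<le> \<bar>x - \<alpha>\<bar> / 2" if x: "\<bar>x - \<alpha>\<bar> < \<delta>'" for x
  proof -
    define e where "e = \<bar>x - \<alpha>\<bar>"
    have e0: "0 \<le> e" by (simp add: e_def)
    have "e * (2 * (\<bar>C\<bar> + 1)) < 1" using x by (simp add: \<delta>'_def e_def field_simps)
    then have Ce: "\<bar>C\<bar> * e \<le> 1/2" using e0 by (simp add: algebra_simps)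
    have "\<bar>g x - \<alpha>\<bar> \<le> C * e^2" using quadratic x by (simp add: \<delta>'_def e_def)
    also have "\<dots> \<le> (\<bar>C\<bar> * e) * e"
      using e0 by (simp add: power2_eq_square mult.assoc[symmetric] mult_right_mono)
    also have "\<dots> \<le> (1/2) * e" by (rule mult_right_mono[OF Ce e0])
    finally show ?thesis by (simp add: e_def)
  qed
  have geometric: "\<bar>(g ^^ n) x0 - \<alpha>\<bar> \<le> (1/2)^n * \<bar>x0 - \<alpha>\<bar>" if x0: "\<bar>x0 - \<alpha>\<bar> < \<delta>'" for x0 n
  proof (induction n)
    case 0 then show ?case by simp
  next
    case (Suc n)
    have "(1/2)^n * \<bar>x0 - \<alpha>\<bar> \<le> \<bar>x0 - \<alpha>\<bar>" by (simp add: power_le_one mult_left_le_one_le)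
    with Suc x0 have "\<bar>(g ^^ n) x0 - \<alpha>\<bar> < \<delta>'" by linarith
    then have "\<bar>g ((g ^^ n) x0) - \<alpha>\<bar> \<le> \<bar>(g ^^ n) x0 - \<alpha>\<bar> / 2" by (rule half)
    with Suc show ?case by simp
  qed
  have "(\<lambda>n. (g ^^ n) x0) \<longlonglongrightarrow> \<alpha> \<and> (\<forall>n. \<bar>(g ^^ n) x0 - \<alpha>\<bar> \<le> \<bar>x0 - \<alpha>\<bar>)"
    if "\<bar>x0 - \<alpha>\<bar> < \<delta>'" for x0
  proof
    have "(\<lambda>n. (1/2::real)^n * \<bar>x0 - \<alpha>\<bar>) \<longlonglongrightarrow> 0 * \<bar>x0 - \<alpha>\<bar>"
      by (intro tendsto_mult LIMSEQ_power_zero tendsto_const) simp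
    then have lim: "(\<lambda>n. (1/2::real)^n * \<bar>x0 - \<alpha>\<bar>) \<longlonglongrightarrow> 0" by simp
    have "\<forall>n. norm ((g ^^ n) x0 - \<alpha>) \<le> (1/2)^n * \<bar>x0 - \<alpha>\<bar>"
      using geometric[OF that] by simp
    from Lim_null_comparison[OF always_eventually[OF this] lim]
    have "(\<lambda>n. (g ^^ n) x0 - \<alpha>) \<longlonglongrightarrow> 0" .
    then show "(\<lambda>n. (g ^^ n) x0) \<longlonglongrightarrow> \<alpha>" by (simp add: LIM_zero_iff)
    have "(1/2::real)^n * \<bar>x0 - \<alpha>\<bar> \<le> \<bar>x0 - \<alpha>\<bar>" for n
      by (simp add: power_le_one mult_left_le_one_le)
    then show "\<forall>n. \<bar>(g ^^ n) x0 - \<alpha>\<bar> \<le> \<bar>x0 - \<alpha>\<bar>"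
      using geometric[OF that] by (meson order_trans)
  qed
  with \<open>\<delta>' > 0\<close> show ?thesis by blast
qed

lemma smooth_real_on_taylor_bound:
  assumes "smooth_real_on D f" and "cball \<alpha> r \<subseteq> D"
    and M: "\<And>t. t \<in> cball \<alpha> r \<Longrightarrow> \<bar>(deriv ^^ n) f t\<bar> \<le> M"
    and "n > 0" and "u \<in> cball \<alpha> r" and "v \<in> cball \<alpha> r"
  shows "\<bar>f v - (\<Sum>m<n. (deriv ^^ m) f u / fact m * (v - u)^m)\<bar> \<le> M / fact n * \<bar>v - u\<bar>^n"
proof (cases "v = u")
  case True
  have "(\<Sum>m<n. (deriv ^^ m) f u / fact m * (v - u)^m) = f u"
    using \<open>n > 0\<close> True by (cases n) (auto simp: sum.lessThan_Suc_shift)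
  with True \<open>n > 0\<close> show ?thesis by (simp add: zero_power)
next
  case False
  have segment: "{min u v..max u v} \<subseteq> cball \<alpha> r"
    using \<open>u \<in> cball \<alpha> r\<close> \<open>v \<in> cball \<alpha> r\<close> by (auto simp: dist_real_def)
  have "\<exists>t. (if v < u then v < t \<and> t < u else u < t \<and> t < v) \<and>
     f v = (\<Sum>m<n. ((deriv ^^ m) f u / fact m) * (v - u)^m) + ((deriv ^^ n) f t / fact n) * (v - u)^n"
  proof (rule Taylor[of n "\<lambda>m. (deriv ^^ m) f" f "min u v" "max u v" u v])
    show "\<forall>m t. m < n \<and> min u v \<le> t \<and> t \<le> max u v \<longrightarrow>
        ((deriv ^^ m) f has_real_derivative (deriv ^^ Suc m) f t) (at t)"
      using assms(1,2) segment unfolding smooth_real_on_def by (meson atLeastAtMost_iff subsetD)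
  qed (use \<open>n > 0\<close> False in auto)
  then obtain t where t: "(if v < u then v < t \<and> t < u else u < t \<and> t < v)"
    and eq: "f v = (\<Sum>m<n. ((deriv ^^ m) f u / fact m) * (v - u)^m)
        + ((deriv ^^ n) f t / fact n) * (v - u)^n" by blast
  have "t \<in> {min u v..max u v}" using t by (auto split: if_splits)
  then have "t \<in> cball \<alpha> r" using segment by blast
  then have "\<bar>(deriv ^^ n) f t\<bar> \<le> M" by (rule M)
  then show ?thesis
    using eq by (simp add: abs_mult power_abs mult_right_mono divide_right_mono)
qed

lemma smooth_real_on_taylor_bigo:
  assumes "open D" "\<alpha> \<in> D" "smooth_real_on D f" "n > 0"
    and u: "(u \<longlongrightarrow> \<alpha>) F" and v: "(v \<longlongrightarrow> \<alpha>) F"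
  shows "(\<lambda>x. f (v x) - (\<Sum>m<n. (deriv ^^ m) f (u x) / fact m * (v x - u x)^m))
           \<in> O[F](\<lambda>x. (v x - u x)^n)"
proof -
  obtain r where r: "r > 0" "cball \<alpha> r \<subseteq> D" using assms(1,2) open_contains_cball by blast
  have "continuous_on (cball \<alpha> r) ((deriv ^^ n) f)"
    using assms(3) r(2) unfolding smooth_real_on_def
    by (meson DERIV_isCont continuous_at_imp_continuous_on subsetD)
  then have "bounded ((deriv ^^ n) f ` cball \<alpha> r)"
    by (intro compact_imp_bounded compact_continuous_image) auto
  then obtain M where M: "\<And>t. t \<in> cball \<alpha> r \<Longrightarrow> \<bar>(deriv ^^ n) f t\<bar> \<le> M"
    by (force simp: bounded_iff)
  have "M \<ge> 0" using M[of \<alpha>] r by auto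
  have "eventually (\<lambda>x. dist (u x) \<alpha> < r) F" "eventually (\<lambda>x. dist (v x) \<alpha> < r) F"
    using u v r by (auto simp: tendsto_iff)
  then have "eventually (\<lambda>x. u x \<in> cball \<alpha> r \<and> v x \<in> cball \<alpha> r) F"
    by eventually_elim (simp add: dist_commute)
  then have "eventually (\<lambda>x. norm (f (v x) - (\<Sum>m<n. (deriv ^^ m) f (u x) / fact m * (v x - u x)^m))
      \<le> (M / fact n + 1) * norm ((v x - u x)^n)) F"
  proof eventually_elim
    case (elim x)
    then have "norm (f (v x) - (\<Sum>m<n. (deriv ^^ m) f (u x) / fact m * (v x - u x)^m))
        \<le> M / fact n * \<bar>v x - u x\<bar>^n"
      using smooth_real_on_taylor_bound[OF assms(3) r(2) M \<open>n > 0\<close>] by simp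
    also have "\<dots> \<le> (M / fact n + 1) * norm ((v x - u x)^n)"
      by (simp add: power_abs algebra_simps)
    finally show ?case .
  qed
  moreover have "M / fact n + 1 > 0" using \<open>M \<ge> 0\<close> by (simp add: add_nonneg_pos)
  ultimately show ?thesis by (intro landau_o.bigI)
qed

lemma has_derivative_imp_lipschitz_at:
  fixes g :: "'a::real_normed_vector \<Rightarrow> real"
  assumes "(g has_derivative L) (at x0)"
  shows "\<exists>C>0. \<exists>\<rho>>0. \<forall>y. norm (y - x0) < \<rho> \<longrightarrow> \<bar>g y - g x0\<bar> \<le> C * norm (y - x0)"
proof -
  from assms have bl: "bounded_linear L"
    and lim: "(\<lambda>h. norm (g (x0 + h) - g x0 - L h) / norm h) \<midarrow>0\<rightarrow> 0"
    by (auto simp: has_derivative_at)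
  obtain K where K: "K > 0" "\<And>h. norm (L h) \<le> norm h * K"
    using bounded_linear.pos_bounded[OF bl] by blast
  have "eventually (\<lambda>h. norm (g (x0 + h) - g x0 - L h) / norm h < 1) (at 0)"
    using lim by (auto simp: tendsto_iff dist_real_def)
  then obtain \<rho> where \<rho>: "\<rho> > 0"
    "\<And>h. h \<noteq> 0 \<Longrightarrow> dist h 0 < \<rho> \<Longrightarrow> norm (g (x0 + h) - g x0 - L h) / norm h < 1"
    unfolding eventually_at by blast
  have "\<bar>g y - g x0\<bar> \<le> (1 + K) * norm (y - x0)" if y: "norm (y - x0) < \<rho>" for y
  proof (cases "y = x0")
    case False
    define h where "h = y - x0"
    have "h \<noteq> 0" using False by (simp add: h_def)
    have "norm (g (x0 + h) - g x0 - L h) < norm h"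
      using \<rho>(2)[OF \<open>h \<noteq> 0\<close>] y \<open>h \<noteq> 0\<close> by (simp add: h_def dist_norm divide_less_eq)
    moreover have "norm (L h) \<le> norm h * K" by (rule K)
    moreover have "\<bar>g (x0 + h) - g x0\<bar> \<le> norm (g (x0 + h) - g x0 - L h) + norm (L h)"
      by (metis abs_triangle_ineq add.commute diff_add_cancel real_norm_def)
    ultimately show ?thesis by (simp add: h_def algebra_simps)
  qed simp
  moreover have "1 + K > 0" using K by simp
  ultimately show ?thesis using \<rho>(1) by blast
qed

lemma smooth2_near0_C1:
  assumes "smooth2_near0 G"
  obtains U g1 g2 where "open U" "(0,0) \<in> U"
    "\<And>p. p \<in> U \<Longrightarrow> (G has_derivative (\<lambda>h. g1 p * fst h + g2 p * snd h)) (at p)"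
    "\<exists>L. (g1 has_derivative L) (at (0,0))" "\<exists>L. (g2 has_derivative L) (at (0,0))"
proof -
  from assms obtain U where U: "open U" "(0,0) \<in> U" "\<forall>k. C2k k U G"
    unfolding smooth2_near0_def by blast
  from U(3) have "C2k 2 U G" by blast
  then obtain g1 g2 where g: "\<forall>p\<in>U. (G has_derivative (\<lambda>h. g1 p * fst h + g2 p * snd h)) (at p)"
    "C2k 1 U g1" "C2k 1 U g2" by (auto simp: numeral_2_eq_2)
  from g(2) U(2) have "\<exists>L. (g1 has_derivative L) (at (0,0))" by auto
  moreover from g(3) U(2) have "\<exists>L. (g2 has_derivative L) (at (0,0))" by auto
  ultimately show ?thesis using that U g(1) by blast
qed

lemma smooth2_near0_isCont: "smooth2_near0 G \<Longrightarrow> isCont G (0,0)"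
  by (metis smooth2_near0_C1 has_derivative_continuous)

lemma has_derivative_partial_fst:
  assumes "(G has_derivative (\<lambda>h. a * fst h + b * snd h)) (at (0,0))"
    and "((\<lambda>t. G (t,0)) has_real_derivative p) (at 0)"
  shows "a = p"
proof -
  have "((\<lambda>t. (t, 0::real)) has_derivative (\<lambda>h. (h, 0))) (at 0)"
    by (auto intro!: derivative_eq_intros)
  from has_derivative_compose[OF this assms(1)]
  have "((\<lambda>t. G (t,0)) has_derivative (\<lambda>h. a * h)) (at 0)"
    by (simp add: o_def)
  moreover have "((\<lambda>t. G (t,0)) has_derivative (*) p) (at 0)"
    using assms(2) by (simp add: has_field_derivative_def)
  ultimately have "(\<lambda>h::real. a * h) = (*) p" by (rule has_derivative_unique)
  then show ?thesis by (metis mult.right_neutral)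
qed

lemma has_derivative_partial_snd:
  assumes "(G has_derivative (\<lambda>h. a * fst h + b * snd h)) (at (0,0))"
    and "((\<lambda>t. G (0,t)) has_real_derivative q) (at 0)"
  shows "b = q"
proof -
  have "((\<lambda>t. (0::real, t)) has_derivative (\<lambda>h. (0, h))) (at 0)"
    by (auto intro!: derivative_eq_intros)
  from has_derivative_compose[OF this assms(1)]
  have "((\<lambda>t. G (0,t)) has_derivative (\<lambda>h. b * h)) (at 0)"
    by (simp add: o_def)
  moreover have "((\<lambda>t. G (0,t)) has_derivative (*) q) (at 0)"
    using assms(2) by (simp add: has_field_derivative_def)
  ultimately have "(\<lambda>h::real. b * h) = (*) q" by (rule has_derivative_unique)
  then show ?thesis by (metis mult.right_neutral)
qed

lemma norm_prod_power2: "norm (v :: real \<times> real)^2 = fst v^2 + snd v^2"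
  by (cases v) (simp add: norm_Pair)

lemma linearization_bound_of_lipschitz_partials:
  fixes G g1 g2 :: "real \<times> real \<Rightarrow> real"
  assumes dG: "\<And>p. norm p < \<rho> \<Longrightarrow> (G has_derivative (\<lambda>h. g1 p * fst h + g2 p * snd h)) (at p)"
    and g1: "\<And>p. norm p < \<rho> \<Longrightarrow> \<bar>g1 p - g1 0\<bar> \<le> C1 * norm p"
    and g2: "\<And>p. norm p < \<rho> \<Longrightarrow> \<bar>g2 p - g2 0\<bar> \<le> C2 * norm p"
    and "norm v < \<rho>" "C1 \<ge> 0" "C2 \<ge> 0"
  shows "\<bar>G v - G 0 - g1 0 * fst v - g2 0 * snd v\<bar> \<le> (C1 + C2) * norm v ^ 2"
proof -
  define S where "S = cball (0::real \<times> real) (norm v)"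
  have small: "norm p < \<rho>" and le_v: "norm p \<le> norm v" if "p \<in> S" for p
    using that \<open>norm v < \<rho>\<close> by (auto simp: S_def)
  define G' where "G' = (\<lambda>p h. g1 p * fst h + g2 p * snd h)"
  have "norm (G v - G 0 - G' 0 (v - 0)) \<le> norm (v - 0) * ((C1 + C2) * norm v)"
  proof (rule differentiable_bound_linearization[where S=S])
    fix t :: real assume "t \<in> {0..1}"
    then show "0 + t *\<^sub>R (v - 0) \<in> S" by (simp add: S_def mult_left_le_one_le)
  next
    fix p assume "p \<in> S"
    then show "(G has_derivative G' p) (at p within S)"
      unfolding G'_def using dG small has_derivative_at_withinI by blast
  next
    fix p assume p: "p \<in> S"
    have e1: "\<bar>g1 p - g1 0\<bar> \<le> C1 * norm v"
      using g1[OF small[OF p]] mult_left_mono[OF le_v[OF p] \<open>C1 \<ge> 0\<close>] by linarith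
    have e2: "\<bar>g2 p - g2 0\<bar> \<le> C2 * norm v"
      using g2[OF small[OF p]] mult_left_mono[OF le_v[OF p] \<open>C2 \<ge> 0\<close>] by linarith
    show "onorm (G' p - G' 0) \<le> (C1 + C2) * norm v"
    proof (rule onorm_le)
      fix h :: "real \<times> real"
      have "norm ((G' p - G' 0) h) = \<bar>(g1 p - g1 0) * fst h + (g2 p - g2 0) * snd h\<bar>"
        by (simp add: G'_def algebra_simps)
      also have "\<dots> \<le> \<bar>g1 p - g1 0\<bar> * \<bar>fst h\<bar> + \<bar>g2 p - g2 0\<bar> * \<bar>snd h\<bar>"
        by (metis abs_mult abs_triangle_ineq)
      also have "\<dots> \<le> (C1 * norm v) * norm h + (C2 * norm v) * norm h"
        using norm_fst_le[of "fst h" "snd h"] norm_snd_le[of "snd h" "fst h"] e1 e2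
          \<open>C1 \<ge> 0\<close> \<open>C2 \<ge> 0\<close>
        by (intro add_mono mult_mono) auto
      finally show "norm ((G' p - G' 0) h) \<le> (C1 + C2) * norm v * norm h"
        by (simp add: algebra_simps)
    qed
  qed (auto simp: S_def)
  then show ?thesis by (simp add: G'_def power2_eq_square algebra_simps)
qed

lemma smooth2_near0_linearization:
  fixes G :: "real \<times> real \<Rightarrow> real"
  assumes "smooth2_near0 G"
    and "((\<lambda>t. G (t,0)) has_real_derivative p) (at 0)"
    and "((\<lambda>t. G (0,t)) has_real_derivative q) (at 0)"
  shows "(\<lambda>v. G v - G (0,0) - p * fst v - q * snd v) \<in> O[nhds (0,0)](\<lambda>v. (norm v)^2)"
proof -
  obtain U g1 g2 where U: "open U" "(0,0) \<in> U"
    and dG: "\<And>p. p \<in> U \<Longrightarrow> (G has_derivative (\<lambda>h. g1 p * fst h + g2 p * snd h)) (at p)"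
    and d1: "\<exists>L. (g1 has_derivative L) (at (0,0))" and d2: "\<exists>L. (g2 has_derivative L) (at (0,0))"
    by (rule smooth2_near0_C1[OF assms(1)]) blast
  have "g1 0 = p" using has_derivative_partial_fst[OF dG[OF U(2)] assms(2)] by (simp add: zero_prod_def)
  moreover have "g2 0 = q" using has_derivative_partial_snd[OF dG[OF U(2)] assms(3)] by (simp add: zero_prod_def)
  moreover obtain C1 \<rho>1 where C1: "C1 > 0" "\<rho>1 > 0" "\<And>y. norm y < \<rho>1 \<Longrightarrow> \<bar>g1 y - g1 0\<bar> \<le> C1 * norm y"
    using d1 has_derivative_imp_lipschitz_at[of g1 _ 0] by (metis diff_zero zero_prod_def)
  moreover obtain C2 \<rho>2 where C2: "C2 > 0" "\<rho>2 > 0" "\<And>y. norm y < \<rho>2 \<Longrightarrow> \<bar>g2 y - g2 0\<bar> \<le> C2 * norm y"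
    using d2 has_derivative_imp_lipschitz_at[of g2 _ 0] by (metis diff_zero zero_prod_def)
  moreover obtain \<rho>3 where \<rho>3: "\<rho>3 > 0" "ball 0 \<rho>3 \<subseteq> U"
    using U open_contains_ball by (metis zero_prod_def)
  moreover define \<rho> where "\<rho> = min \<rho>1 (min \<rho>2 \<rho>3)"
  moreover have "(G has_derivative (\<lambda>h. g1 p * fst h + g2 p * snd h)) (at p)" if "norm p < \<rho>" for p
  proof -
    have "dist 0 p < \<rho>3" using that by (simp add: \<rho>_def dist_norm)
    then have "p \<in> U" using \<rho>3(2) by (meson mem_ball subsetD)
    then show ?thesis by (rule dG)
  qed
  ultimately have "\<bar>G v - G (0,0) - p * fst v - q * snd v\<bar> \<le> (C1 + C2) * norm v ^ 2"
    if "norm v < \<rho>" for v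
    using that linearization_bound_of_lipschitz_partials[of \<rho> G g1 g2 C1 C2 v]
    by (simp add: \<rho>_def zero_prod_def[symmetric])
  moreover have "eventually (\<lambda>v. norm v < \<rho>) (nhds (0::real, 0::real))"
  proof -
    have "\<rho> > 0" using C1 C2 \<rho>3 by (simp add: \<rho>_def)
    then have "eventually (\<lambda>v. v \<in> ball (0,0) \<rho>) (nhds (0::real, 0::real))"
      by (intro eventually_nhds_in_open) auto
    then show ?thesis by (simp add: zero_prod_def[symmetric])
  qed
  ultimately show ?thesis
    by (intro landau_o.bigI[of "C1 + C2"]) (auto elim!: eventually_mono simp: add_pos_pos C1 C2)
qed

text \<open>
  With \<open>a = x - y\<close>, \<open>b = z - y\<close>, \<open>c = w - y\<close>, the divided differences of \<open>f\<close> are written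
  through the third-order Taylor expansion of \<open>f\<close> about \<open>z\<close> (coefficients \<open>f1, f2, f3\<close>,
  remainders \<open>rx, ry, rw\<close>).  The weights of \<open>\<psi>\<close> sum to 1 and annihilate the quadratic and
  cubic terms (\<open>k1\<close>--\<open>k3\<close>), so only \<open>f'(z) = f1\<close> and the remainders survive.
\<close>
lemma psi_of_cubic_expansion:
  fixes a b c f1 f2 f3 rx ry rw :: real
  assumes nz: "a \<noteq> 0" "b \<noteq> 0" "c \<noteq> 0" "a \<noteq> b" "a \<noteq> c" "b \<noteq> c"
  shows "b*(b-c)/((a-b)*(a-c)) * ((f1*a + f2/2*((a-b)^2 - b^2) + f3/6*((a-b)^3 + b^3) + rx - ry)/a)
       + (-3*b^2+2*b*c+2*a*b-a*c)/((a-b)*(b-c)) * ((f1*b - f2/2*b^2 + f3/6*b^3 - ry)/b)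
       + b*(b-a)/((a-c)*(b-c)) * ((f1*c + f2/2*((c-b)^2 - b^2) + f3/6*((c-b)^3 + b^3) + rw - ry)/c)
     = f1 + b*(b-c)/((a-b)*(a-c)) * ((rx - ry)/a) + (-3*b^2+2*b*c+2*a*b-a*c)/((a-b)*(b-c)) * ((0 - ry)/b)
       + b*(b-a)/((a-c)*(b-c)) * ((rw - ry)/c)"
proof -
  define A where "A = b*(b-c)/((a-b)*(a-c))"
  define B where "B = (-3*b^2+2*b*c+2*a*b-a*c)/((a-b)*(b-c))"
  define C where "C = b*(b-a)/((a-c)*(b-c))"
  have ab: "a - b \<noteq> 0" "a - c \<noteq> 0" "b - c \<noteq> 0" using nz by auto
  have k1: "A + B + C = 1"
    unfolding A_def B_def C_def using ab
    by (simp add: divide_simps) ((simp add: algebra_simps power2_eq_square)?)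
  have k2: "A * (a - 2*b) - B * b + C * (c - 2*b) = 0"
    unfolding A_def B_def C_def using ab
    by (simp add: divide_simps) ((simp add: algebra_simps power2_eq_square)?)
  have k3: "A * (a^2 - 3*a*b + 3*b^2) + B * b^2 + C * (c^2 - 3*b*c + 3*b^2) = 0"
    unfolding A_def B_def C_def using ab
    by (simp add: divide_simps) ((simp add: algebra_simps power2_eq_square)?)
  have e1: "(f1*a + f2/2*((a-b)^2 - b^2) + f3/6*((a-b)^3 + b^3) + rx - ry)/a
     = f1 + f2/2*(a - 2*b) + f3/6*(a^2 - 3*a*b + 3*b^2) + (rx - ry)/a"
    using nz by (simp add: field_simps power2_eq_square power3_eq_cube) ((simp add: algebra_simps)?)
  have e2: "(f1*b - f2/2*b^2 + f3/6*b^3 - ry)/b = f1 - f2/2*b + f3/6*b^2 + (0 - ry)/b"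
    using nz by (simp add: field_simps power2_eq_square power3_eq_cube)
  have e3: "(f1*c + f2/2*((c-b)^2 - b^2) + f3/6*((c-b)^3 + b^3) + rw - ry)/c
     = f1 + f2/2*(c - 2*b) + f3/6*(c^2 - 3*b*c + 3*b^2) + (rw - ry)/c"
    using nz by (simp add: field_simps power2_eq_square power3_eq_cube) ((simp add: algebra_simps)?)
  have "A * (f1 + f2/2*(a - 2*b) + f3/6*(a^2 - 3*a*b + 3*b^2) + (rx - ry)/a)
      + B * (f1 - f2/2*b + f3/6*b^2 + (0 - ry)/b)
      + C * (f1 + f2/2*(c - 2*b) + f3/6*(c^2 - 3*b*c + 3*b^2) + (rw - ry)/c)
      = f1 * (A + B + C) + f2/2 * (A * (a - 2*b) - B * b + C * (c - 2*b))
        + f3/6 * (A * (a^2 - 3*a*b + 3*b^2) + B * b^2 + C * (c^2 - 3*b*c + 3*b^2))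
        + (A * ((rx - ry)/a) + B * ((0 - ry)/b) + C * ((rw - ry)/c))"
    by (simp add: algebra_simps)
  also have "\<dots> = f1 + A * ((rx - ry)/a) + B * ((0 - ry)/b) + C * ((rw - ry)/c)"
    using k1 k2 k3 by simp
  finally show ?thesis using e1 e2 e3 by (simp add: A_def B_def C_def)
qed

locale simple_root =
  fixes D :: "real set" and f :: "real \<Rightarrow> real" and \<alpha> \<kappa> :: real
  assumes open_D: "open D" and root_in_D: "\<alpha> \<in> D" and smooth: "smooth_real_on D f"
    and f_root: "f \<alpha> = 0" and simple: "deriv f \<alpha> \<noteq> 0" and kappa: "\<kappa> \<noteq> 0"
begin

lemmas taylor_bigo = smooth_real_on_taylor_bigo[OF open_D root_in_D smooth]

definition "d = deriv f \<alpha>"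
definition "d2 = (deriv ^^ 2) f \<alpha> / 2"
definition "d3 = (deriv ^^ 3) f \<alpha> / 6"
definition "taylor3 h = d * h + d2 * h^2 + d3 * h^3"
definition "W x = x - \<kappa> * f x"
definition "Y x = x - \<kappa> * (f x)^2 / (f x - f (W x))"
definition "divdiff x = (f x - f (W x)) / (x - W x)"

text \<open>
  Points with \<open>w = \<alpha>\<close> are excluded: there \<open>t\<^sub>2, s\<^sub>2\<close> divide by \<open>f(w) = 0\<close>, and the step
  returns \<open>\<alpha>\<close> at once.
\<close>
definition "near_root = at \<alpha> within {x. W x \<noteq> \<alpha>}"

lemma d_nonzero: "d \<noteq> 0" using simple by (simp add: d_def)

lemma f_div_err_tendsto: "((\<lambda>y. f y / (y - \<alpha>)) \<longlongrightarrow> d) (at \<alpha>)"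
proof -
  have "((deriv ^^ 0) f has_real_derivative (deriv ^^ Suc 0) f \<alpha>) (at \<alpha>)"
    using smooth root_in_D unfolding smooth_real_on_def by blast
  then have "(f has_real_derivative d) (at \<alpha>)" by (simp add: d_def)
  then show ?thesis by (simp add: has_field_derivative_iff f_root)
qed

lemma taylor3_bigo:
  assumes "(u \<longlongrightarrow> \<alpha>) F"
  shows "(\<lambda>x. f (u x) - taylor3 (u x - \<alpha>)) \<in> O[F](\<lambda>x. (u x - \<alpha>)^4)"
proof -
  have "\<And>h. (\<Sum>m<4. (deriv ^^ m) f \<alpha> / fact m * h^m) = taylor3 h"
    by (simp add: taylor3_def d_def d2_def d3_def eval_nat_numeral f_root algebra_simps)
  then show ?thesis using taylor_bigo[of 4 "\<lambda>_. \<alpha>" F u] assms by simp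
qed

lemma taylor_linear_bigo:
  assumes "(u \<longlongrightarrow> \<alpha>) F"
  shows "(\<lambda>x. f (u x) - d * (u x - \<alpha>)) \<in> O[F](\<lambda>x. (u x - \<alpha>)^2)"
proof -
  have "\<And>h. (\<Sum>m<2. (deriv ^^ m) f \<alpha> / fact m * h^m) = d * h"
    by (simp add: d_def eval_nat_numeral f_root)
  then show ?thesis using taylor_bigo[of 2 "\<lambda>_. \<alpha>" F u] assms by simp
qed

lemma f_bigo_err:
  assumes "(u \<longlongrightarrow> \<alpha>) F"
  shows "(\<lambda>x. f (u x)) \<in> O[F](\<lambda>x. u x - \<alpha>)"
  using taylor_bigo[of 1 "\<lambda>_. \<alpha>" F u] assms by (simp add: f_root)

lemma near_root_le: "near_root \<le> at \<alpha>" unfolding near_root_def by (rule at_le) simp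

lemma x_tendsto: "((\<lambda>x. x) \<longlongrightarrow> \<alpha>) near_root" unfolding near_root_def by (rule tendsto_ident_at)

lemma x_err_tendsto_0: "((\<lambda>x. x - \<alpha>) \<longlongrightarrow> 0) near_root"
  using tendsto_diff[OF x_tendsto tendsto_const[of \<alpha>]] by simp

lemma ev_x_err_nonzero: "eventually (\<lambda>x. x - \<alpha> \<noteq> 0) near_root"
  unfolding near_root_def by (simp add: eventually_at_filter)

lemma ev_w_err_nonzero: "eventually (\<lambda>x. W x - \<alpha> \<noteq> 0) near_root"
  unfolding near_root_def by (simp add: eventually_at_filter)

lemma f_bigtheta: "(\<lambda>x. f x) \<in> \<Theta>[near_root](\<lambda>x. x - \<alpha>)"
  using bigthetaI_tendsto[OF d_nonzero tendsto_mono[OF near_root_le f_div_err_tendsto]] .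

lemma ev_f_nonzero: "eventually (\<lambda>x. f x \<noteq> 0) near_root"
  using eventually_nonzero_bigtheta[OF f_bigtheta] ev_x_err_nonzero by blast

lemma x_minus_w_bigtheta: "(\<lambda>x. x - W x) \<in> \<Theta>[near_root](\<lambda>x. x - \<alpha>)"
proof -
  have "(\<lambda>x. \<kappa> * f x) \<in> \<Theta>[near_root](\<lambda>x. x - \<alpha>)" using f_bigtheta kappa by simp
  then show ?thesis by (simp add: W_def)
qed

lemma ev_x_minus_w_nonzero: "eventually (\<lambda>x. x - W x \<noteq> 0) near_root"
  using eventually_nonzero_bigtheta[OF x_minus_w_bigtheta] ev_x_err_nonzero by blast

lemma w_err_bigo: "(\<lambda>x. W x - \<alpha>) \<in> O[near_root](\<lambda>x. x - \<alpha>)"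
proof -
  have "(\<lambda>x. \<kappa> * f x) \<in> O[near_root](\<lambda>x. x - \<alpha>)" using f_bigtheta by auto
  from sum_in_bigo(2)[OF landau_o.big_refl this]
  have "(\<lambda>x. (x - \<alpha>) - \<kappa> * f x) \<in> O[near_root](\<lambda>x. x - \<alpha>)" .
  then show ?thesis by (simp add: W_def algebra_simps)
qed

lemma w_err_tendsto_0: "((\<lambda>x. W x - \<alpha>) \<longlongrightarrow> 0) near_root" using bigo_tendsto_zero[OF w_err_bigo x_err_tendsto_0] .

lemma w_tendsto: "(W \<longlongrightarrow> \<alpha>) near_root"
  using tendsto_add[OF w_err_tendsto_0 tendsto_const[of \<alpha>]] by simp

lemma f_w_bigtheta: "(\<lambda>x. f (W x)) \<in> \<Theta>[near_root](\<lambda>x. W x - \<alpha>)"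
proof -
  have "filterlim W (at \<alpha>) near_root" using w_tendsto ev_w_err_nonzero by (intro filterlim_atI) auto
  from filterlim_compose[OF f_div_err_tendsto this] show ?thesis by (intro bigthetaI_tendsto[OF d_nonzero]) (simp add: o_def)
qed

lemma ev_f_w_nonzero: "eventually (\<lambda>x. f (W x) \<noteq> 0) near_root"
  using eventually_nonzero_bigtheta[OF f_w_bigtheta] ev_w_err_nonzero by blast

lemma x_err_cube_bigo: "(\<lambda>x. (x - \<alpha>)^3) \<in> O[near_root](\<lambda>x. (x - \<alpha>)^2)"
  using bigo_power_mono[OF x_err_tendsto_0, of 2 3] by simp

definition "taylor3_rem v = f v - taylor3 (v - \<alpha>)"

lemma divdiff_eq:
  "eventually (\<lambda>x. divdiff x - (d + d2 * ((x - \<alpha>) + (W x - \<alpha>)))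
     = d3 * ((x - \<alpha>)^2 + (x - \<alpha>) * (W x - \<alpha>) + (W x - \<alpha>)^2)
       + (taylor3_rem x - taylor3_rem (W x)) / (x - W x)) near_root"
  using ev_x_minus_w_nonzero
proof eventually_elim
  case (elim x)
  have "taylor3 (x - \<alpha>) - taylor3 (W x - \<alpha>) = (x - W x) * (d + d2 * ((x - \<alpha>) + (W x - \<alpha>))
     + d3 * ((x - \<alpha>)^2 + (x - \<alpha>) * (W x - \<alpha>) + (W x - \<alpha>)^2))"
    by (simp add: taylor3_def algebra_simps power2_eq_square power3_eq_cube)
  then have "divdiff x = (taylor3_rem x - taylor3_rem (W x)) / (x - W x) + (d + d2 * ((x - \<alpha>) + (W x - \<alpha>))
     + d3 * ((x - \<alpha>)^2 + (x - \<alpha>) * (W x - \<alpha>) + (W x - \<alpha>)^2))"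
    using elim by (simp add: divdiff_def taylor3_rem_def field_simps)
  then show ?case by (simp add: algebra_simps)
qed

lemma divdiff_expansion:
  "(\<lambda>x. divdiff x - (d + d2 * ((x - \<alpha>) + (W x - \<alpha>)))) \<in> O[near_root](\<lambda>x. (x - \<alpha>)^2)"
proof -
  have "(\<lambda>x. taylor3_rem x - taylor3_rem (W x)) \<in> O[near_root](\<lambda>x. (x - \<alpha>)^4)"
    unfolding taylor3_rem_def
    by (intro sum_in_bigo(2) taylor3_bigo[OF x_tendsto, simplified]
        landau_o.big_trans[OF taylor3_bigo[OF w_tendsto] landau_o.big_power[OF w_err_bigo, of 4]])
  then have "(\<lambda>x. (taylor3_rem x - taylor3_rem (W x)) / (x - W x)) \<in> O[near_root](\<lambda>x. (x - \<alpha>)^4 / (x - \<alpha>))"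
    by (rule bigo_divide_bigtheta[OF _ x_minus_w_bigtheta ev_x_err_nonzero])
  moreover have "eventually (\<lambda>x. (x - \<alpha>)^4 / (x - \<alpha>) = (x - \<alpha>)^3) near_root"
    using ev_x_err_nonzero by eventually_elim (simp add: eval_nat_numeral)
  ultimately have "(\<lambda>x. (taylor3_rem x - taylor3_rem (W x)) / (x - W x)) \<in> O[near_root](\<lambda>x. (x - \<alpha>)^3)"
    by (rule bigo_eventually_cong_bound[rotated])
  then have rem: "(\<lambda>x. (taylor3_rem x - taylor3_rem (W x)) / (x - W x)) \<in> O[near_root](\<lambda>x. (x - \<alpha>)^2)"
    using x_err_cube_bigo by (rule landau_o.big_trans)
  have "(\<lambda>x. (x - \<alpha>) * (W x - \<alpha>)) \<in> O[near_root](\<lambda>x. (x - \<alpha>)^2)"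
    using landau_o.big.mult[OF landau_o.big_refl[of "\<lambda>x. x - \<alpha>"] w_err_bigo] by (simp add: power2_eq_square)
  then have "(\<lambda>x. d3 * ((x - \<alpha>)^2 + (x - \<alpha>) * (W x - \<alpha>) + (W x - \<alpha>)^2)) \<in> O[near_root](\<lambda>x. (x - \<alpha>)^2)"
    by (intro bigo_const_mult sum_in_bigo(1) landau_o.big_refl landau_o.big_power[OF w_err_bigo])
  from bigo_eventually_cong[OF divdiff_eq sum_in_bigo(1)[OF this rem]] show ?thesis .
qed

lemma x_err_square_bigo: "(\<lambda>x. (x - \<alpha>)^2) \<in> O[near_root](\<lambda>x. x - \<alpha>)"
  using bigo_power_mono[OF x_err_tendsto_0, of 1 2] by simp

lemma x_err_bigo_1: "(\<lambda>x. x - \<alpha>) \<in> O[near_root](\<lambda>_. 1)" using tendsto_imp_bigo_1[OF x_err_tendsto_0] .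
lemma w_err_bigo_1: "(\<lambda>x. W x - \<alpha>) \<in> O[near_root](\<lambda>_. 1)" using tendsto_imp_bigo_1[OF w_err_tendsto_0] .

lemma divdiff_minus_d_bigo: "(\<lambda>x. divdiff x - d) \<in> O[near_root](\<lambda>x. x - \<alpha>)"
proof -
  have a: "(\<lambda>x. divdiff x - (d + d2 * ((x - \<alpha>) + (W x - \<alpha>)))) \<in> O[near_root](\<lambda>x. x - \<alpha>)"
    using landau_o.big_trans[OF divdiff_expansion x_err_square_bigo] .
  have "(\<lambda>x. (x - \<alpha>) + (W x - \<alpha>)) \<in> O[near_root](\<lambda>x. x - \<alpha>)"
    by (rule sum_in_bigo(1)[OF landau_o.big_refl w_err_bigo])
  then have b: "(\<lambda>x. d2 * ((x - \<alpha>) + (W x - \<alpha>))) \<in> O[near_root](\<lambda>x. x - \<alpha>)" by simp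
  have "(\<lambda>x. (divdiff x - (d + d2 * ((x - \<alpha>) + (W x - \<alpha>)))) + d2 * ((x - \<alpha>) + (W x - \<alpha>))) \<in> O[near_root](\<lambda>x. x - \<alpha>)"
    by (rule sum_in_bigo(1)[OF a b])
  then show ?thesis by (simp add: algebra_simps)
qed

lemma divdiff_tendsto: "(divdiff \<longlongrightarrow> d) near_root"
proof -
  have "((\<lambda>x. divdiff x - d) \<longlongrightarrow> 0) near_root" using bigo_tendsto_zero[OF divdiff_minus_d_bigo x_err_tendsto_0] .
  from tendsto_add[OF this tendsto_const[of d]] show ?thesis by simp
qed

lemma divdiff_bigtheta_1: "divdiff \<in> \<Theta>[near_root](\<lambda>_. 1)"
  using divdiff_tendsto by (intro bigthetaI_tendsto[OF d_nonzero]) simp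

lemma ev_divdiff_nonzero: "eventually (\<lambda>x. divdiff x \<noteq> 0) near_root"
  using eventually_nonzero_bigtheta[OF divdiff_bigtheta_1] by simp

lemma Y_eq_secant: "Y x = x - f x / divdiff x"
  by (simp add: Y_def divdiff_def W_def power2_eq_square)

definition "secant_defect x = (x - \<alpha>) * divdiff x - f x"

lemma secant_defect_eq:
  "eventually (\<lambda>x. secant_defect x - d2 * ((x - \<alpha>) * (W x - \<alpha>))
     = d3 * ((x - \<alpha>) * (W x - \<alpha>) * ((x - \<alpha>) + (W x - \<alpha>)))
       + ((W x - \<alpha>) * (f x - taylor3 (x - \<alpha>)) - (x - \<alpha>) * (f (W x) - taylor3 (W x - \<alpha>)))
         / (x - W x)) near_root"
  using ev_x_minus_w_nonzero
proof eventually_elim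
  case (elim x)
  have "divdiff x * (x - W x) = f x - f (W x)" using elim by (simp add: divdiff_def)
  have "secant_defect x * (x - W x) = (x - \<alpha>) * (divdiff x * (x - W x)) - f x * (x - W x)"
    by (simp add: secant_defect_def algebra_simps)
  also have "\<dots> = (x - \<alpha>) * (f x - f (W x)) - f x * (x - W x)"
    by (simp only: \<open>divdiff x * (x - W x) = f x - f (W x)\<close>)
  also have "\<dots> = (W x - \<alpha>) * f x - (x - \<alpha>) * f (W x)" by (simp add: algebra_simps)
  finally have "secant_defect x * (x - W x) = (W x - \<alpha>) * f x - (x - \<alpha>) * f (W x)" .
  moreover have "(W x - \<alpha>) * taylor3 (x - \<alpha>) - (x - \<alpha>) * taylor3 (W x - \<alpha>)
      = (x - W x) * (d2 * ((x - \<alpha>) * (W x - \<alpha>)) + d3 * ((x - \<alpha>) * (W x - \<alpha>) * ((x - \<alpha>) + (W x - \<alpha>))))"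
    by (simp add: taylor3_def algebra_simps power2_eq_square power3_eq_cube)
  ultimately show ?case using elim by (simp add: field_simps)
qed

lemma secant_defect_expansion:
  "(\<lambda>x. secant_defect x - d2 * ((x - \<alpha>) * (W x - \<alpha>))) \<in> O[near_root](\<lambda>x. (x - \<alpha>)^2 * (W x - \<alpha>))"
proof -
  have "(\<lambda>x. (x - \<alpha>) + (W x - \<alpha>)) \<in> O[near_root](\<lambda>x. x - \<alpha>)"
    by (rule sum_in_bigo(1)[OF landau_o.big_refl w_err_bigo])
  from landau_o.big.mult[OF landau_o.big_refl[of "\<lambda>x. (x - \<alpha>) * (W x - \<alpha>)"] this]
  have cubic: "(\<lambda>x. d3 * ((x - \<alpha>) * (W x - \<alpha>) * ((x - \<alpha>) + (W x - \<alpha>))))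
      \<in> O[near_root](\<lambda>x. (x - \<alpha>)^2 * (W x - \<alpha>))"
    by (intro bigo_const_mult) (simp add: power2_eq_square mult_ac)
  have "(\<lambda>x. (W x - \<alpha>) * (f x - taylor3 (x - \<alpha>))) \<in> O[near_root](\<lambda>x. (x - \<alpha>)^4 * (W x - \<alpha>))"
    using landau_o.big.mult_left[OF taylor3_bigo[OF x_tendsto], of "\<lambda>x. W x - \<alpha>"] by (simp add: mult_ac)
  moreover have "(\<lambda>x. (x - \<alpha>) * (f (W x) - taylor3 (W x - \<alpha>))) \<in> O[near_root](\<lambda>x. (x - \<alpha>)^4 * (W x - \<alpha>))"
  proof -
    have "(\<lambda>x. (W x - \<alpha>) * (W x - \<alpha>)^3) \<in> O[near_root](\<lambda>x. (W x - \<alpha>) * (x - \<alpha>)^3)"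
      using landau_o.big.mult_left[OF landau_o.big_power[OF w_err_bigo, of 3]] .
    then have "(\<lambda>x. (W x - \<alpha>)^4) \<in> O[near_root](\<lambda>x. (W x - \<alpha>) * (x - \<alpha>)^3)"
      by (simp add: eval_nat_numeral)
    from landau_o.big.mult_left[OF landau_o.big_trans[OF taylor3_bigo[OF w_tendsto] this], of "\<lambda>x. x - \<alpha>"]
    show ?thesis by (simp add: eval_nat_numeral mult_ac)
  qed
  ultimately have "(\<lambda>x. ((W x - \<alpha>) * (f x - taylor3 (x - \<alpha>)) - (x - \<alpha>) * (f (W x) - taylor3 (W x - \<alpha>)))
      / (x - W x)) \<in> O[near_root](\<lambda>x. (x - \<alpha>)^4 * (W x - \<alpha>) / (x - \<alpha>))"
    by (intro bigo_divide_bigtheta sum_in_bigo(2) x_minus_w_bigtheta ev_x_err_nonzero)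
  moreover have "eventually (\<lambda>x. (x - \<alpha>)^4 * (W x - \<alpha>) / (x - \<alpha>) = (x - \<alpha>)^3 * (W x - \<alpha>)) near_root"
    using ev_x_err_nonzero by eventually_elim (simp add: eval_nat_numeral)
  ultimately have "(\<lambda>x. ((W x - \<alpha>) * (f x - taylor3 (x - \<alpha>)) - (x - \<alpha>) * (f (W x) - taylor3 (W x - \<alpha>)))
      / (x - W x)) \<in> O[near_root](\<lambda>x. (x - \<alpha>)^3 * (W x - \<alpha>))"
    by (rule bigo_eventually_cong_bound[rotated])
  moreover have "(\<lambda>x. (x - \<alpha>)^3 * (W x - \<alpha>)) \<in> O[near_root](\<lambda>x. (x - \<alpha>)^2 * (W x - \<alpha>))"
    by (rule landau_o.big.mult_right[OF x_err_cube_bigo])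
  ultimately show ?thesis
    using bigo_eventually_cong[OF secant_defect_eq sum_in_bigo(1)[OF cubic]] landau_o.big_trans by blast
qed

lemma y_err_expansion:
  "(\<lambda>x. (Y x - \<alpha>) - d2 / d * ((x - \<alpha>) * (W x - \<alpha>))) \<in> O[near_root](\<lambda>x. (x - \<alpha>)^2 * (W x - \<alpha>))"
proof -
  have "(\<lambda>x. d2 / d * ((x - \<alpha>) * (W x - \<alpha>) * (divdiff x - d))) \<in> O[near_root](\<lambda>x. (x - \<alpha>)^2 * (W x - \<alpha>))"
    using landau_o.big.mult[OF landau_o.big_refl[of "\<lambda>x. (x - \<alpha>) * (W x - \<alpha>)"] divdiff_minus_d_bigo]
    by (intro bigo_const_mult) (simp add: power2_eq_square mult_ac)
  from sum_in_bigo(2)[OF secant_defect_expansion this]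
  have "(\<lambda>x. (secant_defect x - d2 * ((x - \<alpha>) * (W x - \<alpha>)) - d2 / d * ((x - \<alpha>) * (W x - \<alpha>) * (divdiff x - d)))
      / divdiff x) \<in> O[near_root](\<lambda>x. (x - \<alpha>)^2 * (W x - \<alpha>))"
    using bigo_divide_bigtheta[OF _ divdiff_bigtheta_1] by simp
  moreover have "eventually (\<lambda>x. (Y x - \<alpha>) - d2 / d * ((x - \<alpha>) * (W x - \<alpha>))
      = (secant_defect x - d2 * ((x - \<alpha>) * (W x - \<alpha>)) - d2 / d * ((x - \<alpha>) * (W x - \<alpha>) * (divdiff x - d)))
        / divdiff x) near_root"
    using ev_divdiff_nonzero
    by eventually_elim (use d_nonzero in \<open>simp add: Y_eq_secant secant_defect_def field_simps\<close>)
  ultimately show ?thesis by (rule bigo_eventually_cong[rotated])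
qed

lemma y_err_bigo: "(\<lambda>x. Y x - \<alpha>) \<in> O[near_root](\<lambda>x. (x - \<alpha>) * (W x - \<alpha>))"
proof -
  have a: "(\<lambda>x. (x - \<alpha>)^2 * (W x - \<alpha>)) \<in> O[near_root](\<lambda>x. (x - \<alpha>) * (W x - \<alpha>))"
    using landau_o.big.mult_right[OF x_err_square_bigo] .
  have b: "(\<lambda>x. d2 / d * ((x - \<alpha>) * (W x - \<alpha>))) \<in> O[near_root](\<lambda>x. (x - \<alpha>) * (W x - \<alpha>))"
    by (rule bigo_const_mult[OF landau_o.big_refl])
  have "(\<lambda>x. ((Y x - \<alpha>) - d2 / d * ((x - \<alpha>) * (W x - \<alpha>))) + d2 / d * ((x - \<alpha>) * (W x - \<alpha>))) \<in> O[near_root](\<lambda>x. (x - \<alpha>) * (W x - \<alpha>))"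
    by (rule sum_in_bigo(1)[OF landau_o.big_trans[OF y_err_expansion a] b])
  then show ?thesis by simp
qed

lemma xw_err_tendsto_0: "((\<lambda>x. (x - \<alpha>) * (W x - \<alpha>)) \<longlongrightarrow> 0) near_root"
  using tendsto_mult[OF x_err_tendsto_0 w_err_tendsto_0] by simp

lemma y_tendsto: "(Y \<longlongrightarrow> \<alpha>) near_root"
  using tendsto_add[OF bigo_tendsto_zero[OF y_err_bigo xw_err_tendsto_0] tendsto_const[of \<alpha>]] by simp

end

locale eighth_order_scheme = simple_root D f \<alpha> \<kappa> for D f \<alpha> \<kappa> +
  fixes G H :: "real \<times> real \<Rightarrow> real"
  assumes smooth_G: "smooth2_near0 G" and smooth_H: "smooth2_near0 H"
begin

definition "targ x = (f (Y x) / f x, f (Y x) / f (W x))"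
definition "Z x = Y x - \<kappa> * (f (Y x) * f x) / (f x - f (W x)) * G (targ x)"

lemma Z_eq_secant: "Z x = Y x - f (Y x) / divdiff x * G (targ x)"
  by (simp add: Z_def divdiff_def W_def)

lemma f_y_bigo: "(\<lambda>x. f (Y x)) \<in> O[near_root](\<lambda>x. (x - \<alpha>) * (W x - \<alpha>))"
  using landau_o.big_trans[OF f_bigo_err[OF y_tendsto] y_err_bigo] .

lemma f_y_linear: "(\<lambda>x. f (Y x) - d * (Y x - \<alpha>)) \<in> O[near_root](\<lambda>x. ((x - \<alpha>) * (W x - \<alpha>))^2)"
  using landau_o.big_trans[OF taylor_linear_bigo[OF y_tendsto] landau_o.big_power[OF y_err_bigo, of 2]] .

lemma xw_err_square_bigo: "(\<lambda>x. ((x - \<alpha>) * (W x - \<alpha>))^2) \<in> O[near_root](\<lambda>x. (x - \<alpha>)^2 * (W x - \<alpha>))"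
proof -
  have "(\<lambda>x. ((x - \<alpha>)^2 * (W x - \<alpha>)) * (W x - \<alpha>)) \<in> O[near_root](\<lambda>x. (x - \<alpha>)^2 * (W x - \<alpha>))"
    by (rule landau_o.big_1_mult[OF landau_o.big_refl w_err_bigo_1])
  then show ?thesis by (simp add: power2_eq_square mult_ac)
qed

lemma xw_err_square_bigo_x3w: "(\<lambda>x. ((x - \<alpha>) * (W x - \<alpha>))^2) \<in> O[near_root](\<lambda>x. (x - \<alpha>)^3 * (W x - \<alpha>))"
proof -
  have "(\<lambda>x. ((x - \<alpha>)^2 * (W x - \<alpha>)) * (W x - \<alpha>)) \<in> O[near_root](\<lambda>x. ((x - \<alpha>)^2 * (W x - \<alpha>)) * (x - \<alpha>))"
    by (rule landau_o.big.mult_left[OF w_err_bigo])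
  then show ?thesis by (simp add: power2_eq_square power3_eq_cube mult_ac)
qed

lemma f_y_linear_x2w: "(\<lambda>x. f (Y x) - d * (Y x - \<alpha>)) \<in> O[near_root](\<lambda>x. (x - \<alpha>)^2 * (W x - \<alpha>))"
  using landau_o.big_trans[OF f_y_linear xw_err_square_bigo] .

lemma targ_fst_bigo: "(\<lambda>x. fst (targ x)) \<in> O[near_root](\<lambda>x. W x - \<alpha>)"
proof -
  have "(\<lambda>x. f (Y x) / f x) \<in> O[near_root](\<lambda>x. (x - \<alpha>) * (W x - \<alpha>) / (x - \<alpha>))"
    by (rule bigo_divide_bigtheta[OF f_y_bigo f_bigtheta ev_x_err_nonzero])
  moreover have "eventually (\<lambda>x. (x - \<alpha>) * (W x - \<alpha>) / (x - \<alpha>) = W x - \<alpha>) near_root"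
    using ev_x_err_nonzero by eventually_elim simp
  ultimately show ?thesis unfolding targ_def by (simp add: bigo_eventually_cong_bound)
qed

lemma targ_snd_bigo: "(\<lambda>x. snd (targ x)) \<in> O[near_root](\<lambda>x. x - \<alpha>)"
proof -
  have "(\<lambda>x. f (Y x) / f (W x)) \<in> O[near_root](\<lambda>x. (x - \<alpha>) * (W x - \<alpha>) / (W x - \<alpha>))"
    by (rule bigo_divide_bigtheta[OF f_y_bigo f_w_bigtheta ev_w_err_nonzero])
  moreover have "eventually (\<lambda>x. (x - \<alpha>) * (W x - \<alpha>) / (W x - \<alpha>) = x - \<alpha>) near_root"
    using ev_w_err_nonzero by eventually_elim simp
  ultimately show ?thesis unfolding targ_def by (simp add: bigo_eventually_cong_bound)
qed

lemma targ_tendsto: "(targ \<longlongrightarrow> (0,0)) near_root"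
proof -
  have "((\<lambda>x. (fst (targ x), snd (targ x))) \<longlongrightarrow> (0,0)) near_root"
    by (intro tendsto_Pair bigo_tendsto_zero[OF targ_fst_bigo w_err_tendsto_0] bigo_tendsto_zero[OF targ_snd_bigo x_err_tendsto_0])
  then show ?thesis by simp
qed

lemma targ_fst_expansion: "(\<lambda>x. d * fst (targ x) - d2 * (W x - \<alpha>)) \<in> O[near_root](\<lambda>x. (x - \<alpha>)^2)"
proof -
  define N where "N x = d * (f (Y x) - d * (Y x - \<alpha>)) + d^2 * ((Y x - \<alpha>) - d2 / d * ((x - \<alpha>) * (W x - \<alpha>)))
      - d2 * ((W x - \<alpha>) * (f x - d * (x - \<alpha>)))" for x
  have a: "(\<lambda>x. d * (f (Y x) - d * (Y x - \<alpha>))) \<in> O[near_root](\<lambda>x. (x - \<alpha>)^2 * (W x - \<alpha>))"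
    by (rule bigo_const_mult[OF f_y_linear_x2w])
  have b: "(\<lambda>x. d^2 * ((Y x - \<alpha>) - d2 / d * ((x - \<alpha>) * (W x - \<alpha>)))) \<in> O[near_root](\<lambda>x. (x - \<alpha>)^2 * (W x - \<alpha>))"
    by (rule bigo_const_mult[OF y_err_expansion])
  have "(\<lambda>x. (W x - \<alpha>) * (f x - d * (x - \<alpha>))) \<in> O[near_root](\<lambda>x. (W x - \<alpha>) * (x - \<alpha>)^2)"
    by (rule landau_o.big.mult_left[OF taylor_linear_bigo[OF x_tendsto]])
  then have c: "(\<lambda>x. d2 * ((W x - \<alpha>) * (f x - d * (x - \<alpha>)))) \<in> O[near_root](\<lambda>x. (x - \<alpha>)^2 * (W x - \<alpha>))"
    by (intro bigo_const_mult) (simp add: mult.commute)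
  have N: "N \<in> O[near_root](\<lambda>x. (x - \<alpha>)^2 * (W x - \<alpha>))"
    unfolding N_def by (rule sum_in_bigo(2)[OF sum_in_bigo(1)[OF a b] c])
  have "(\<lambda>x. N x / f x) \<in> O[near_root](\<lambda>x. (x - \<alpha>)^2 * (W x - \<alpha>) / (x - \<alpha>))"
    by (rule bigo_divide_bigtheta[OF N f_bigtheta ev_x_err_nonzero])
  moreover have "eventually (\<lambda>x. (x - \<alpha>)^2 * (W x - \<alpha>) / (x - \<alpha>) = (x - \<alpha>) * (W x - \<alpha>)) near_root"
    using ev_x_err_nonzero by eventually_elim (simp add: power2_eq_square)
  ultimately have "(\<lambda>x. N x / f x) \<in> O[near_root](\<lambda>x. (x - \<alpha>) * (W x - \<alpha>))" by (rule bigo_eventually_cong_bound[rotated])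
  moreover have "(\<lambda>x. (x - \<alpha>) * (W x - \<alpha>)) \<in> O[near_root](\<lambda>x. (x - \<alpha>)^2)"
    using landau_o.big.mult_left[OF w_err_bigo, of "\<lambda>x. x - \<alpha>"] by (simp add: power2_eq_square)
  ultimately have q: "(\<lambda>x. N x / f x) \<in> O[near_root](\<lambda>x. (x - \<alpha>)^2)" by (rule landau_o.big_trans)
  have "eventually (\<lambda>x. d * fst (targ x) - d2 * (W x - \<alpha>) = N x / f x) near_root"
    using ev_f_nonzero
  proof eventually_elim
    case (elim x)
    have "N x = d * f (Y x) - d2 * (W x - \<alpha>) * f x" using d_nonzero
      by (simp add: N_def power2_eq_square field_simps)
    then show ?case using elim by (simp add: targ_def field_simps)
  qed
  then show ?thesis by (rule bigo_eventually_cong) (rule q)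
qed

lemma targ_snd_expansion: "(\<lambda>x. d * snd (targ x) - d2 * (x - \<alpha>)) \<in> O[near_root](\<lambda>x. (x - \<alpha>)^2)"
proof -
  define N where "N x = d * (f (Y x) - d * (Y x - \<alpha>)) + d^2 * ((Y x - \<alpha>) - d2 / d * ((x - \<alpha>) * (W x - \<alpha>)))
      - d2 * ((x - \<alpha>) * (f (W x) - d * (W x - \<alpha>)))" for x
  have a: "(\<lambda>x. d * (f (Y x) - d * (Y x - \<alpha>))) \<in> O[near_root](\<lambda>x. (x - \<alpha>)^2 * (W x - \<alpha>))"
    by (rule bigo_const_mult[OF f_y_linear_x2w])
  have b: "(\<lambda>x. d^2 * ((Y x - \<alpha>) - d2 / d * ((x - \<alpha>) * (W x - \<alpha>)))) \<in> O[near_root](\<lambda>x. (x - \<alpha>)^2 * (W x - \<alpha>))"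
    by (rule bigo_const_mult[OF y_err_expansion])
  have "(\<lambda>x. (W x - \<alpha>)^2) \<in> O[near_root](\<lambda>x. (W x - \<alpha>) * (x - \<alpha>))"
    using landau_o.big.mult_left[OF w_err_bigo, of "\<lambda>x. W x - \<alpha>"] by (simp add: power2_eq_square)
  with taylor_linear_bigo[OF w_tendsto] have "(\<lambda>x. f (W x) - d * (W x - \<alpha>)) \<in> O[near_root](\<lambda>x. (W x - \<alpha>) * (x - \<alpha>))"
    by (rule landau_o.big_trans)
  then have "(\<lambda>x. (x - \<alpha>) * (f (W x) - d * (W x - \<alpha>))) \<in> O[near_root](\<lambda>x. (x - \<alpha>) * ((W x - \<alpha>) * (x - \<alpha>)))"
    by (rule landau_o.big.mult_left)
  then have c: "(\<lambda>x. d2 * ((x - \<alpha>) * (f (W x) - d * (W x - \<alpha>)))) \<in> O[near_root](\<lambda>x. (x - \<alpha>)^2 * (W x - \<alpha>))"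
    by (intro bigo_const_mult) (simp add: power2_eq_square mult_ac)
  have N: "N \<in> O[near_root](\<lambda>x. (x - \<alpha>)^2 * (W x - \<alpha>))"
    unfolding N_def by (rule sum_in_bigo(2)[OF sum_in_bigo(1)[OF a b] c])
  have "(\<lambda>x. N x / f (W x)) \<in> O[near_root](\<lambda>x. (x - \<alpha>)^2 * (W x - \<alpha>) / (W x - \<alpha>))"
    by (rule bigo_divide_bigtheta[OF N f_w_bigtheta ev_w_err_nonzero])
  moreover have "eventually (\<lambda>x. (x - \<alpha>)^2 * (W x - \<alpha>) / (W x - \<alpha>) = (x - \<alpha>)^2) near_root"
    using ev_w_err_nonzero by eventually_elim simp
  ultimately have q: "(\<lambda>x. N x / f (W x)) \<in> O[near_root](\<lambda>x. (x - \<alpha>)^2)" by (rule bigo_eventually_cong_bound[rotated])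
  have "eventually (\<lambda>x. d * snd (targ x) - d2 * (x - \<alpha>) = N x / f (W x)) near_root"
    using ev_f_w_nonzero
  proof eventually_elim
    case (elim x)
    have "N x = d * f (Y x) - d2 * (x - \<alpha>) * f (W x)" using d_nonzero
      by (simp add: N_def power2_eq_square field_simps)
    then show ?case using elim by (simp add: targ_def field_simps)
  qed
  then show ?thesis by (rule bigo_eventually_cong) (rule q)
qed

lemma G_targ_bigo_1: "(\<lambda>x. G (targ x)) \<in> O[near_root](\<lambda>_. 1)"
  by (rule tendsto_imp_bigo_1[OF isCont_tendsto_compose[OF smooth2_near0_isCont[OF smooth_G] targ_tendsto]])

lemma z_err_bigo_xw: "(\<lambda>x. Z x - \<alpha>) \<in> O[near_root](\<lambda>x. (x - \<alpha>) * (W x - \<alpha>))"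
proof -
  have "(\<lambda>x. f (Y x) / divdiff x) \<in> O[near_root](\<lambda>x. (x - \<alpha>) * (W x - \<alpha>) / 1)"
    by (rule bigo_divide_bigtheta[OF f_y_bigo divdiff_bigtheta_1]) simp
  then have "(\<lambda>x. f (Y x) / divdiff x) \<in> O[near_root](\<lambda>x. (x - \<alpha>) * (W x - \<alpha>))" by simp
  from landau_o.big_1_mult[OF this G_targ_bigo_1]
  have "(\<lambda>x. f (Y x) / divdiff x * G (targ x)) \<in> O[near_root](\<lambda>x. (x - \<alpha>) * (W x - \<alpha>))" .
  from sum_in_bigo(2)[OF y_err_bigo this] show ?thesis by (simp add: Z_eq_secant algebra_simps)
qed

lemma z_tendsto: "(Z \<longlongrightarrow> \<alpha>) near_root"
  using tendsto_add[OF bigo_tendsto_zero[OF z_err_bigo_xw xw_err_tendsto_0] tendsto_const[of \<alpha>]]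
  by simp

text \<open>\<open>\<psi>\<close> divides by \<open>z - y\<close>; at points with \<open>z = y\<close> the step simply returns \<open>z\<close>.\<close>
definition "near_root_z = at \<alpha> within {x. W x \<noteq> \<alpha> \<and> Z x \<noteq> Y x}"

lemma near_root_z_le: "near_root_z \<le> near_root"
  unfolding near_root_z_def near_root_def by (rule at_le) auto

lemma bigo_near_root_z: "u \<in> O[near_root](g) \<Longrightarrow> u \<in> O[near_root_z](g)"
  using landau_o.big.filter_mono[OF near_root_z_le] .

lemma bigtheta_near_root_z: "u \<in> \<Theta>[near_root](g) \<Longrightarrow> u \<in> \<Theta>[near_root_z](g)"
  using landau_theta.filter_mono[OF near_root_z_le] .

lemma eventually_near_root_z: "eventually Q near_root \<Longrightarrow> eventually Q near_root_z"
  using filter_leD[OF near_root_z_le] .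

lemma ev_z_ne_y: "eventually (\<lambda>x. Z x - Y x \<noteq> 0) near_root_z"
  unfolding near_root_z_def by (simp add: eventually_at_filter)

lemma xw_err_smallo_x: "(\<lambda>x. (x - \<alpha>) * (W x - \<alpha>)) \<in> o[near_root](\<lambda>x. x - \<alpha>)"
  using landau_o.big_small_mult[OF landau_o.big_refl tendsto_zero_imp_smallo_1[OF w_err_tendsto_0],
      of "\<lambda>x. x - \<alpha>"]
  by simp

lemma xw_err_smallo_w: "(\<lambda>x. (x - \<alpha>) * (W x - \<alpha>)) \<in> o[near_root](\<lambda>x. W x - \<alpha>)"
  using landau_o.small_big_mult[OF tendsto_zero_imp_smallo_1[OF x_err_tendsto_0] landau_o.big_refl,
      of "\<lambda>x. W x - \<alpha>"]
  by simp

definition "a_gap x = x - Y x"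
definition "b_gap x = Z x - Y x"
definition "c_gap x = W x - Y x"

lemma a_gap_bigtheta: "a_gap \<in> \<Theta>[near_root_z](\<lambda>x. x - \<alpha>)"
  using bigtheta_near_root_z[OF bigtheta_diff_smallo[OF landau_o.big_small_trans[OF y_err_bigo xw_err_smallo_x]]]
  by (simp add: a_gap_def[abs_def])

lemma c_gap_bigtheta: "c_gap \<in> \<Theta>[near_root_z](\<lambda>x. W x - \<alpha>)"
  using bigtheta_near_root_z[OF bigtheta_diff_smallo[OF landau_o.big_small_trans[OF y_err_bigo xw_err_smallo_w]]]
  by (simp add: c_gap_def[abs_def])

lemma a_minus_b_gap_bigtheta: "(\<lambda>x. a_gap x - b_gap x) \<in> \<Theta>[near_root_z](\<lambda>x. x - \<alpha>)"
  using bigtheta_near_root_z[OF bigtheta_diff_smallo[OF landau_o.big_small_trans[OF z_err_bigo_xw xw_err_smallo_x]]]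
  by (simp add: a_gap_def b_gap_def)

lemma a_minus_c_gap_bigtheta: "(\<lambda>x. a_gap x - c_gap x) \<in> \<Theta>[near_root_z](\<lambda>x. x - \<alpha>)"
  using bigtheta_near_root_z[OF x_minus_w_bigtheta] by (simp add: a_gap_def c_gap_def)

lemma b_minus_c_gap_bigtheta: "(\<lambda>x. b_gap x - c_gap x) \<in> \<Theta>[near_root_z](\<lambda>x. W x - \<alpha>)"
proof -
  have "(\<lambda>x. W x - Z x) \<in> \<Theta>[near_root_z](\<lambda>x. W x - \<alpha>)"
    using bigtheta_near_root_z[OF bigtheta_diff_smallo[OF landau_o.big_small_trans[OF z_err_bigo_xw xw_err_smallo_w]]]
    by simp
  then have "(\<lambda>x. - (W x - Z x)) \<in> \<Theta>[near_root_z](\<lambda>x. W x - \<alpha>)"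
    by (subst landau_theta.uminus_in_iff)
  then show ?thesis by (simp add: b_gap_def c_gap_def)
qed

lemma y_minus_z_bigo: "(\<lambda>x. Y x - Z x) \<in> O[near_root_z](\<lambda>x. (x - \<alpha>) * (W x - \<alpha>))"
  using bigo_near_root_z[OF sum_in_bigo(2)[OF y_err_bigo z_err_bigo_xw]] by simp

lemma b_gap_bigo: "b_gap \<in> O[near_root_z](\<lambda>x. (x - \<alpha>) * (W x - \<alpha>))"
  using bigo_near_root_z[OF sum_in_bigo(2)[OF z_err_bigo_xw y_err_bigo]] by (simp add: b_gap_def[abs_def])

definition "rem v x = f (v x) - (f (Z x) + deriv f (Z x) * (v x - Z x)
    + (deriv ^^ 2) f (Z x) / 2 * (v x - Z x)^2 + (deriv ^^ 3) f (Z x) / 6 * (v x - Z x)^3)"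

lemma rem_bigo:
  assumes "(v \<longlongrightarrow> \<alpha>) near_root"
  shows "rem v \<in> O[near_root_z](\<lambda>x. (v x - Z x)^4)"
proof -
  have "(\<Sum>m<4. (deriv ^^ m) f (Z x) / fact m * (v x - Z x)^m) = f (Z x) + deriv f (Z x) * (v x - Z x)
      + (deriv ^^ 2) f (Z x) / 2 * (v x - Z x)^2 + (deriv ^^ 3) f (Z x) / 6 * (v x - Z x)^3" for x
    by (simp add: eval_nat_numeral)
  then show ?thesis
    using bigo_near_root_z[OF taylor_bigo[of 4 Z near_root v]] z_tendsto assms
    by (simp add: rem_def[abs_def])
qed

lemma rem_x_bigo: "rem (\<lambda>x. x) \<in> O[near_root_z](\<lambda>x. (x - \<alpha>)^4)"
proof -
  have "(\<lambda>x. x - Z x) \<in> O[near_root_z](\<lambda>x. x - \<alpha>)"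
    using bigtheta_near_root_z[OF bigtheta_diff_smallo[OF landau_o.big_small_trans[OF z_err_bigo_xw xw_err_smallo_x]]]
    by auto
  from landau_o.big_trans[OF rem_bigo[OF x_tendsto] landau_o.big_power[OF this, of 4]] show ?thesis .
qed

lemma rem_w_bigo: "rem W \<in> O[near_root_z](\<lambda>x. (W x - \<alpha>)^4)"
proof -
  have "(\<lambda>x. W x - Z x) \<in> O[near_root_z](\<lambda>x. W x - \<alpha>)"
    using bigtheta_near_root_z[OF bigtheta_diff_smallo[OF landau_o.big_small_trans[OF z_err_bigo_xw xw_err_smallo_w]]]
    by auto
  from landau_o.big_trans[OF rem_bigo[OF w_tendsto] landau_o.big_power[OF this, of 4]] show ?thesis .
qed

lemma rem_y_bigo_xw: "rem Y \<in> O[near_root_z](\<lambda>x. ((x - \<alpha>) * (W x - \<alpha>))^4)"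
  using landau_o.big_trans[OF rem_bigo[OF y_tendsto] landau_o.big_power[OF y_minus_z_bigo, of 4]] .

lemma rem_y_bigo_x: "rem Y \<in> O[near_root_z](\<lambda>x. (x - \<alpha>)^4)"
proof -
  have "(\<lambda>x. (W x - \<alpha>)^4) \<in> O[near_root_z](\<lambda>_. 1)"
    using landau_o.big_power[OF bigo_near_root_z[OF w_err_bigo_1], of 4] by simp
  then have "(\<lambda>x. (x - \<alpha>)^4 * (W x - \<alpha>)^4) \<in> O[near_root_z](\<lambda>x. (x - \<alpha>)^4)"
    by (rule landau_o.big_1_mult[OF landau_o.big_refl])
  with rem_y_bigo_xw show ?thesis by (simp add: power_mult_distrib) (rule landau_o.big_trans)
qed

lemma rem_y_bigo_w: "rem Y \<in> O[near_root_z](\<lambda>x. (W x - \<alpha>)^4)"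
proof -
  have "(\<lambda>x. (x - \<alpha>)^4) \<in> O[near_root_z](\<lambda>_. 1)"
    using landau_o.big_power[OF bigo_near_root_z[OF x_err_bigo_1], of 4] by simp
  then have "(\<lambda>x. (W x - \<alpha>)^4 * (x - \<alpha>)^4) \<in> O[near_root_z](\<lambda>x. (W x - \<alpha>)^4)"
    by (rule landau_o.big_1_mult[OF landau_o.big_refl])
  with rem_y_bigo_xw show ?thesis
    by (simp add: power_mult_distrib mult.commute) (rule landau_o.big_trans)
qed

lemma ev_x_err_nonzero_z: "eventually (\<lambda>x. x - \<alpha> \<noteq> 0) near_root_z"
  using eventually_near_root_z[OF ev_x_err_nonzero] .

lemma ev_w_err_nonzero_z: "eventually (\<lambda>x. W x - \<alpha> \<noteq> 0) near_root_z"
  using eventually_near_root_z[OF ev_w_err_nonzero] .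

lemma psi_minus_deriv_eq:
  "eventually (\<lambda>x. psi f x (W x) (Y x) (Z x) - deriv f (Z x) =
      b_gap x * (b_gap x - c_gap x) / ((a_gap x - b_gap x) * (a_gap x - c_gap x))
        * ((rem (\<lambda>x. x) x - rem Y x) / a_gap x)
    + (-3 * b_gap x^2 + 2 * b_gap x * c_gap x + 2 * a_gap x * b_gap x - a_gap x * c_gap x)
        / ((a_gap x - b_gap x) * (b_gap x - c_gap x)) * ((0 - rem Y x) / b_gap x)
    + b_gap x * (b_gap x - a_gap x) / ((a_gap x - c_gap x) * (b_gap x - c_gap x))
        * ((rem W x - rem Y x) / c_gap x)) near_root_z"
proof -
  have "eventually (\<lambda>x. a_gap x \<noteq> 0) near_root_z" "eventually (\<lambda>x. a_gap x - b_gap x \<noteq> 0) near_root_z"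
    "eventually (\<lambda>x. a_gap x - c_gap x \<noteq> 0) near_root_z"
    using eventually_nonzero_bigtheta[OF a_gap_bigtheta] eventually_nonzero_bigtheta[OF a_minus_b_gap_bigtheta]
      eventually_nonzero_bigtheta[OF a_minus_c_gap_bigtheta] ev_x_err_nonzero_z
    by blast+
  moreover have "eventually (\<lambda>x. c_gap x \<noteq> 0) near_root_z" "eventually (\<lambda>x. b_gap x - c_gap x \<noteq> 0) near_root_z"
    using eventually_nonzero_bigtheta[OF c_gap_bigtheta] eventually_nonzero_bigtheta[OF b_minus_c_gap_bigtheta]
      ev_w_err_nonzero_z
    by blast+
  moreover have "eventually (\<lambda>x. b_gap x \<noteq> 0) near_root_z" using ev_z_ne_y by (simp add: b_gap_def)
  ultimately show ?thesis
  proof eventually_elim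
    case (elim x)
    define f1 f2 f3 where "f1 = deriv f (Z x)" "f2 = (deriv ^^ 2) f (Z x)" "f3 = (deriv ^^ 3) f (Z x)"
    have "f x - f (Y x) = f1 * a_gap x + f2/2 * ((a_gap x - b_gap x)^2 - b_gap x^2)
        + f3/6 * ((a_gap x - b_gap x)^3 + b_gap x^3) + rem (\<lambda>x. x) x - rem Y x"
      "f (Z x) - f (Y x) = f1 * b_gap x - f2/2 * b_gap x^2 + f3/6 * b_gap x^3 - rem Y x"
      "f (W x) - f (Y x) = f1 * c_gap x + f2/2 * ((c_gap x - b_gap x)^2 - b_gap x^2)
        + f3/6 * ((c_gap x - b_gap x)^3 + b_gap x^3) + rem W x - rem Y x"
      unfolding rem_def a_gap_def b_gap_def c_gap_def f1_f2_f3_def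
      by (simp_all add: power2_eq_square power3_eq_cube algebra_simps)
    moreover have "psi f x (W x) (Y x) (Z x)
      = b_gap x * (b_gap x - c_gap x) / ((a_gap x - b_gap x) * (a_gap x - c_gap x))
          * ((f x - f (Y x)) / a_gap x)
      + (-3 * b_gap x^2 + 2 * b_gap x * c_gap x + 2 * a_gap x * b_gap x - a_gap x * c_gap x)
          / ((a_gap x - b_gap x) * (b_gap x - c_gap x)) * ((f (Z x) - f (Y x)) / b_gap x)
      + b_gap x * (b_gap x - a_gap x) / ((a_gap x - c_gap x) * (b_gap x - c_gap x))
          * ((f (W x) - f (Y x)) / c_gap x)"
      unfolding psi_def Let_def a_gap_def b_gap_def c_gap_def by simp
    moreover have "a_gap x \<noteq> b_gap x" "a_gap x \<noteq> c_gap x" "b_gap x \<noteq> c_gap x" using elim by auto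
    ultimately show ?case
      using psi_of_cubic_expansion[of "a_gap x" "b_gap x" "c_gap x" f1 f2 f3 "rem (\<lambda>x. x) x" "rem Y x" "rem W x"]
        elim by (simp add: f1_f2_f3_def)
  qed
qed

lemma psi_term_x_bigo:
  "(\<lambda>x. b_gap x * (b_gap x - c_gap x) / ((a_gap x - b_gap x) * (a_gap x - c_gap x))
      * ((rem (\<lambda>x. x) x - rem Y x) / a_gap x))
    \<in> O[near_root_z](\<lambda>x. (x - \<alpha>)^2 * (W x - \<alpha>)^2)"
proof -
  have "(\<lambda>x. b_gap x * (b_gap x - c_gap x)) \<in> O[near_root_z](\<lambda>x. ((x - \<alpha>) * (W x - \<alpha>)) * (W x - \<alpha>))"
    using landau_o.big.mult[OF b_gap_bigo bigthetaD1[OF b_minus_c_gap_bigtheta]] .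
  then have weight: "(\<lambda>x. b_gap x * (b_gap x - c_gap x) / ((a_gap x - b_gap x) * (a_gap x - c_gap x)))
      \<in> O[near_root_z](\<lambda>x. ((x - \<alpha>) * (W x - \<alpha>)) * (W x - \<alpha>) / ((x - \<alpha>) * (x - \<alpha>)))"
    using ev_x_err_nonzero_z
    by (intro bigo_divide_bigtheta landau_theta.mult a_minus_b_gap_bigtheta a_minus_c_gap_bigtheta)
      (auto elim: eventually_mono)
  have quotient: "(\<lambda>x. (rem (\<lambda>x. x) x - rem Y x) / a_gap x) \<in> O[near_root_z](\<lambda>x. (x - \<alpha>)^4 / (x - \<alpha>))"
    by (rule bigo_divide_bigtheta[OF sum_in_bigo(2)[OF rem_x_bigo rem_y_bigo_x] a_gap_bigtheta
          ev_x_err_nonzero_z])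
  have "eventually (\<lambda>x. ((x - \<alpha>) * (W x - \<alpha>)) * (W x - \<alpha>) / ((x - \<alpha>) * (x - \<alpha>))
      * ((x - \<alpha>)^4 / (x - \<alpha>)) = (x - \<alpha>)^2 * (W x - \<alpha>)^2) near_root_z"
  proof -
    have cancel: "(e * w) * w / (e * e) * (e^4 / e) = e^2 * w^2" if "e \<noteq> 0" for e w :: real
      using that by (simp add: field_simps eval_nat_numeral)
    show ?thesis using ev_x_err_nonzero_z by eventually_elim (rule cancel)
  qed
  from bigo_eventually_cong_bound[OF this landau_o.big.mult[OF weight quotient]] show ?thesis .
qed

lemma psi_term_z_bigo:
  "(\<lambda>x. (-3 * b_gap x^2 + 2 * b_gap x * c_gap x + 2 * a_gap x * b_gap x - a_gap x * c_gap x)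
      / ((a_gap x - b_gap x) * (b_gap x - c_gap x)) * ((0 - rem Y x) / b_gap x))
    \<in> O[near_root_z](\<lambda>x. (x - \<alpha>)^2 * (W x - \<alpha>)^2)"
proof -
  have xw_1: "(\<lambda>x. (x - \<alpha>) * (W x - \<alpha>)) \<in> O[near_root_z](\<lambda>_. 1)"
    using landau_o.big.mult[OF bigo_near_root_z[OF x_err_bigo_1] bigo_near_root_z[OF w_err_bigo_1]] by simp
  have x_1: "(\<lambda>x. x - \<alpha>) \<in> O[near_root_z](\<lambda>_. 1)" using bigo_near_root_z[OF x_err_bigo_1] .
  have w_1: "(\<lambda>x. W x - \<alpha>) \<in> O[near_root_z](\<lambda>_. 1)" using bigo_near_root_z[OF w_err_bigo_1] .
  have a_bigo: "a_gap \<in> O[near_root_z](\<lambda>x. x - \<alpha>)" and c_bigo: "c_gap \<in> O[near_root_z](\<lambda>x. W x - \<alpha>)"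
    using a_gap_bigtheta c_gap_bigtheta by blast+
  have "(\<lambda>x. -3 * (b_gap x * b_gap x) + 2 * (b_gap x * c_gap x) + 2 * (b_gap x * a_gap x)
      - a_gap x * c_gap x) \<in> O[near_root_z](\<lambda>x. (x - \<alpha>) * (W x - \<alpha>))"
    by (intro sum_in_bigo bigo_const_mult landau_o.big_1_mult[OF b_gap_bigo]
        landau_o.big_trans[OF b_gap_bigo xw_1] landau_o.big_trans[OF c_bigo w_1]
        landau_o.big_trans[OF a_bigo x_1] landau_o.big.mult[OF a_bigo c_bigo])
  then have "(\<lambda>x. -3 * b_gap x^2 + 2 * b_gap x * c_gap x + 2 * a_gap x * b_gap x - a_gap x * c_gap x)
      \<in> O[near_root_z](\<lambda>x. (x - \<alpha>) * (W x - \<alpha>))"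
    by (simp add: power2_eq_square mult.assoc mult.commute[of "a_gap _"])
  then have weight: "(\<lambda>x. (-3 * b_gap x^2 + 2 * b_gap x * c_gap x + 2 * a_gap x * b_gap x - a_gap x * c_gap x)
      / ((a_gap x - b_gap x) * (b_gap x - c_gap x)))
      \<in> O[near_root_z](\<lambda>x. (x - \<alpha>) * (W x - \<alpha>) / ((x - \<alpha>) * (W x - \<alpha>)))"
    using ev_x_err_nonzero_z ev_w_err_nonzero_z
    by (intro bigo_divide_bigtheta landau_theta.mult a_minus_b_gap_bigtheta b_minus_c_gap_bigtheta)
      (auto intro!: eventually_conj)
  have "(\<lambda>x. (0 - rem Y x) / b_gap x) \<in> O[near_root_z](\<lambda>x. (Y x - Z x)^4 / b_gap x)"
    using rem_bigo[OF y_tendsto] ev_z_ne_y by (intro bigo_divide_bigtheta) (auto simp: b_gap_def)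
  moreover have "eventually (\<lambda>x. (Y x - Z x)^4 / b_gap x = - ((Y x - Z x)^3)) near_root_z"
    using ev_z_ne_y by eventually_elim (simp add: b_gap_def eval_nat_numeral field_simps)
  ultimately have "(\<lambda>x. (0 - rem Y x) / b_gap x) \<in> O[near_root_z](\<lambda>x. - ((Y x - Z x)^3))"
    by (rule bigo_eventually_cong_bound[rotated])
  then have quotient: "(\<lambda>x. (0 - rem Y x) / b_gap x) \<in> O[near_root_z](\<lambda>x. ((x - \<alpha>) * (W x - \<alpha>))^3)"
    using landau_o.big_power[OF y_minus_z_bigo, of 3] by simp (rule landau_o.big_trans)
  have "eventually (\<lambda>x. (x - \<alpha>) * (W x - \<alpha>) / ((x - \<alpha>) * (W x - \<alpha>)) * ((x - \<alpha>) * (W x - \<alpha>))^3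
      = ((x - \<alpha>) * (W x - \<alpha>)) * ((x - \<alpha>)^2 * (W x - \<alpha>)^2)) near_root_z"
  proof -
    have cancel: "e * w / (e * w) * (e * w)^3 = (e * w) * (e^2 * w^2)" if "e \<noteq> 0" "w \<noteq> 0" for e w :: real
      using that by (simp add: field_simps eval_nat_numeral)
    show ?thesis using ev_x_err_nonzero_z ev_w_err_nonzero_z by eventually_elim (rule cancel)
  qed
  from bigo_eventually_cong_bound[OF this landau_o.big.mult[OF weight quotient]]
  show ?thesis using landau_o.big_1_mult[OF landau_o.big_refl xw_1, of "\<lambda>x. (x - \<alpha>)^2 * (W x - \<alpha>)^2"]
    by (simp add: mult.commute) (rule landau_o.big_trans)
qed

lemma psi_term_w_bigo:
  "(\<lambda>x. b_gap x * (b_gap x - a_gap x) / ((a_gap x - c_gap x) * (b_gap x - c_gap x))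
      * ((rem W x - rem Y x) / c_gap x))
    \<in> O[near_root_z](\<lambda>x. (x - \<alpha>)^2 * (W x - \<alpha>)^2)"
proof -
  have "(\<lambda>x. - (a_gap x - b_gap x)) \<in> O[near_root_z](\<lambda>x. x - \<alpha>)"
    by (subst landau_o.big.uminus_in_iff) (rule bigthetaD1[OF a_minus_b_gap_bigtheta])
  then have b_minus_a: "(\<lambda>x. b_gap x - a_gap x) \<in> O[near_root_z](\<lambda>x. x - \<alpha>)" by simp
  have weight: "(\<lambda>x. b_gap x * (b_gap x - a_gap x) / ((a_gap x - c_gap x) * (b_gap x - c_gap x)))
      \<in> O[near_root_z](\<lambda>x. ((x - \<alpha>) * (W x - \<alpha>)) * (x - \<alpha>) / ((x - \<alpha>) * (W x - \<alpha>)))"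
    using ev_x_err_nonzero_z ev_w_err_nonzero_z
    by (intro bigo_divide_bigtheta landau_o.big.mult b_gap_bigo b_minus_a landau_theta.mult
        a_minus_c_gap_bigtheta b_minus_c_gap_bigtheta)
      (auto intro!: eventually_conj)
  have quotient: "(\<lambda>x. (rem W x - rem Y x) / c_gap x) \<in> O[near_root_z](\<lambda>x. (W x - \<alpha>)^4 / (W x - \<alpha>))"
    by (rule bigo_divide_bigtheta[OF sum_in_bigo(2)[OF rem_w_bigo rem_y_bigo_w] c_gap_bigtheta
          ev_w_err_nonzero_z])
  have "eventually (\<lambda>x. ((x - \<alpha>) * (W x - \<alpha>)) * (x - \<alpha>) / ((x - \<alpha>) * (W x - \<alpha>))
      * ((W x - \<alpha>)^4 / (W x - \<alpha>)) = (x - \<alpha>) * (W x - \<alpha>)^3) near_root_z"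
  proof -
    have cancel: "(e * w) * e / (e * w) * (w^4 / w) = e * w^3" if "e \<noteq> 0" "w \<noteq> 0" for e w :: real
      using that by (simp add: field_simps eval_nat_numeral)
    show ?thesis using ev_x_err_nonzero_z ev_w_err_nonzero_z by eventually_elim (rule cancel)
  qed
  from bigo_eventually_cong_bound[OF this landau_o.big.mult[OF weight quotient]]
  have "(\<lambda>x. b_gap x * (b_gap x - a_gap x) / ((a_gap x - c_gap x) * (b_gap x - c_gap x))
      * ((rem W x - rem Y x) / c_gap x)) \<in> O[near_root_z](\<lambda>x. (x - \<alpha>) * (W x - \<alpha>)^3)" .
  moreover have "(\<lambda>x. (x - \<alpha>) * (W x - \<alpha>) * (W x - \<alpha>)^2)
      \<in> O[near_root_z](\<lambda>x. (x - \<alpha>) * (x - \<alpha>) * (W x - \<alpha>)^2)"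
    by (intro landau_o.big.mult landau_o.big_refl bigo_near_root_z[OF w_err_bigo])
  then have "(\<lambda>x. (x - \<alpha>) * (W x - \<alpha>)^3) \<in> O[near_root_z](\<lambda>x. (x - \<alpha>)^2 * (W x - \<alpha>)^2)"
    by (simp add: power2_eq_square power3_eq_cube mult_ac)
  ultimately show ?thesis by (rule landau_o.big_trans)
qed

lemma psi_err:
  "(\<lambda>x. psi f x (W x) (Y x) (Z x) - deriv f (Z x)) \<in> O[near_root_z](\<lambda>x. (x - \<alpha>)^2 * (W x - \<alpha>)^2)"
  by (rule bigo_eventually_cong[OF psi_minus_deriv_eq
        sum_in_bigo(1)[OF sum_in_bigo(1)[OF psi_term_x_bigo psi_term_z_bigo] psi_term_w_bigo]])

definition "sarg x = (f (Z x) / f x, f (Z x) / f (W x))"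
definition "Phi x = Z x - f (Z x) / psi f x (W x) (Y x) (Z x) * H (sarg x)"

lemma step_eq_Phi: "step \<kappa> f G H = Phi"
  unfolding step_def Phi_def sarg_def Z_def targ_def Y_def W_def Let_def by (rule refl)

lemma Phi_if_y_root: "Y x = \<alpha> \<Longrightarrow> Phi x = \<alpha>"
  by (simp add: Phi_def Z_def f_root)

lemma Phi_if_w_root: "W x = \<alpha> \<Longrightarrow> Phi x = \<alpha>"
proof -
  assume w: "W x = \<alpha>"
  have "Y x = \<alpha>"
  proof (cases "f x = 0")
    case True then show ?thesis using w by (simp add: Y_def W_def)
  next
    case False
    then have "Y x = x - \<kappa> * f x" using w by (simp add: Y_def f_root power2_eq_square)
    then show ?thesis using w by (simp add: W_def)
  qed
  then show ?thesis by (rule Phi_if_y_root)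
qed

lemma Phi_root: "Phi \<alpha> = \<alpha>"
  by (rule Phi_if_w_root) (simp add: W_def f_root)

lemma Phi_if_z_eq_y: "Z x = Y x \<Longrightarrow> Phi x = Z x"
  by (simp add: Phi_def psi_def Let_def)

lemma eventually_near_root_iff: "eventually P near_root \<longleftrightarrow> eventually (\<lambda>x. W x \<noteq> \<alpha> \<longrightarrow> P x) (at \<alpha>)"
  unfolding near_root_def eventually_at_filter by (simp add: imp_conjL conj_commute)

lemma Phi_local_bound:
  assumes Phi_bigo: "(\<lambda>x. Phi x - \<alpha>) \<in> O[near_root_z](\<lambda>x. (x - \<alpha>) ^ k)"
    and z_eq_y: "eventually (\<lambda>x. Z x = Y x \<longrightarrow> \<bar>Z x - \<alpha>\<bar> \<le> C * \<bar>x - \<alpha>\<bar> ^ k) near_root"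
  shows "\<exists>\<delta>>0. \<exists>C. \<forall>x. \<bar>x - \<alpha>\<bar> < \<delta> \<longrightarrow> \<bar>Phi x - \<alpha>\<bar> \<le> C * \<bar>x - \<alpha>\<bar> ^ k"
proof -
  have "eventually (\<lambda>x. x \<notin> {x. W x \<noteq> \<alpha> \<and> Z x \<noteq> Y x} \<longrightarrow> \<bar>Phi x - \<alpha>\<bar> \<le> max C 0 * \<bar>x - \<alpha>\<bar> ^ k) (at \<alpha>)"
    using z_eq_y unfolding eventually_near_root_iff
  proof eventually_elim
    case (elim x)
    have "C * \<bar>x - \<alpha>\<bar> ^ k \<le> max C 0 * \<bar>x - \<alpha>\<bar> ^ k" "0 \<le> max C 0 * \<bar>x - \<alpha>\<bar> ^ k"
      by (simp_all add: mult_right_mono)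
    then show ?case
      using elim Phi_if_w_root[of x] Phi_if_z_eq_y[of x] by (cases "W x = \<alpha>") auto
  qed
  then show ?thesis
    using bigo_at_within_imp_local_bound[of "\<lambda>x. Phi x - \<alpha>"] Phi_bigo Phi_root
    unfolding near_root_z_def by auto
qed

lemma deriv_f_z_tendsto: "((\<lambda>x. deriv f (Z x)) \<longlongrightarrow> d) near_root"
proof -
  have "((deriv ^^ 1) f has_real_derivative (deriv ^^ Suc 1) f \<alpha>) (at \<alpha>)"
    using smooth root_in_D unfolding smooth_real_on_def by blast
  then have "isCont (deriv f) \<alpha>" by (simp add: DERIV_isCont)
  from isCont_tendsto_compose[OF this z_tendsto] show ?thesis by (simp add: d_def)
qed

lemma psi_bigtheta_1: "(\<lambda>x. psi f x (W x) (Y x) (Z x)) \<in> \<Theta>[near_root_z](\<lambda>_. 1)"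
proof -
  have "((\<lambda>x. (x - \<alpha>)^2 * (W x - \<alpha>)^2) \<longlongrightarrow> 0^2 * 0^2) near_root"
    by (intro tendsto_mult tendsto_power x_err_tendsto_0 w_err_tendsto_0)
  then have "((\<lambda>x. (x - \<alpha>)^2 * (W x - \<alpha>)^2) \<longlongrightarrow> 0) near_root_z"
    using tendsto_mono[OF near_root_z_le] by simp
  from tendsto_add[OF bigo_tendsto_zero[OF psi_err this] tendsto_mono[OF near_root_z_le deriv_f_z_tendsto]]
  have "((\<lambda>x. psi f x (W x) (Y x) (Z x)) \<longlongrightarrow> d) near_root_z" by simp
  then show ?thesis by (intro bigthetaI_tendsto[OF d_nonzero]) simp
qed

lemma sarg_tendsto: "(sarg \<longlongrightarrow> (0,0)) near_root"
proof -
  have fz: "(\<lambda>x. f (Z x)) \<in> O[near_root](\<lambda>x. (x - \<alpha>) * (W x - \<alpha>))"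
    using landau_o.big_trans[OF f_bigo_err[OF z_tendsto] z_err_bigo_xw] .
  have "(\<lambda>x. f (Z x) / f x) \<in> O[near_root](\<lambda>x. (x - \<alpha>) * (W x - \<alpha>) / (x - \<alpha>))"
    by (rule bigo_divide_bigtheta[OF fz f_bigtheta ev_x_err_nonzero])
  moreover have "eventually (\<lambda>x. (x - \<alpha>) * (W x - \<alpha>) / (x - \<alpha>) = W x - \<alpha>) near_root"
    using ev_x_err_nonzero by eventually_elim simp
  ultimately have s1: "(\<lambda>x. f (Z x) / f x) \<in> O[near_root](\<lambda>x. W x - \<alpha>)"
    by (rule bigo_eventually_cong_bound[rotated])
  have "(\<lambda>x. f (Z x) / f (W x)) \<in> O[near_root](\<lambda>x. (x - \<alpha>) * (W x - \<alpha>) / (W x - \<alpha>))"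
    by (rule bigo_divide_bigtheta[OF fz f_w_bigtheta ev_w_err_nonzero])
  moreover have "eventually (\<lambda>x. (x - \<alpha>) * (W x - \<alpha>) / (W x - \<alpha>) = x - \<alpha>) near_root"
    using ev_w_err_nonzero by eventually_elim simp
  ultimately have s2: "(\<lambda>x. f (Z x) / f (W x)) \<in> O[near_root](\<lambda>x. x - \<alpha>)"
    by (rule bigo_eventually_cong_bound[rotated])
  have "((\<lambda>x. (f (Z x) / f x, f (Z x) / f (W x))) \<longlongrightarrow> (0,0)) near_root"
    by (intro tendsto_Pair bigo_tendsto_zero[OF s1 w_err_tendsto_0] bigo_tendsto_zero[OF s2 x_err_tendsto_0])
  then show ?thesis by (simp add: sarg_def[abs_def])
qed

lemma z_err_bigo_square: "(\<lambda>x. Z x - \<alpha>) \<in> O[near_root](\<lambda>x. (x - \<alpha>)^2)"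
proof -
  have "(\<lambda>x. (x - \<alpha>) * (W x - \<alpha>)) \<in> O[near_root](\<lambda>x. (x - \<alpha>)^2)"
    using landau_o.big.mult[OF landau_o.big_refl w_err_bigo, of "\<lambda>x. x - \<alpha>"] by (simp add: power2_eq_square)
  with z_err_bigo_xw show ?thesis by (rule landau_o.big_trans)
qed

lemma Phi_err_bigo_square: "(\<lambda>x. Phi x - \<alpha>) \<in> O[near_root_z](\<lambda>x. (x - \<alpha>)^2)"
proof -
  have H_1: "(\<lambda>x. H (sarg x)) \<in> O[near_root](\<lambda>_. 1)"
    by (rule tendsto_imp_bigo_1[OF isCont_tendsto_compose[OF smooth2_near0_isCont[OF smooth_H] sarg_tendsto]])
  have "(\<lambda>x. f (Z x)) \<in> O[near_root_z](\<lambda>x. (x - \<alpha>)^2)"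
    using bigo_near_root_z[OF landau_o.big_trans[OF f_bigo_err[OF z_tendsto] z_err_bigo_square]] .
  from bigo_divide_bigtheta[OF this psi_bigtheta_1]
  have "(\<lambda>x. f (Z x) / psi f x (W x) (Y x) (Z x)) \<in> O[near_root_z](\<lambda>x. (x - \<alpha>)^2)" by simp
  from landau_o.big_1_mult[OF this bigo_near_root_z[OF H_1]]
  have "(\<lambda>x. f (Z x) / psi f x (W x) (Y x) (Z x) * H (sarg x)) \<in> O[near_root_z](\<lambda>x. (x - \<alpha>)^2)" .
  from sum_in_bigo(2)[OF bigo_near_root_z[OF z_err_bigo_square] this] show ?thesis
    by (simp add: Phi_def algebra_simps)
qed

lemma Phi_quadratic: "\<exists>\<delta>>0. \<exists>C. \<forall>x. \<bar>x - \<alpha>\<bar> < \<delta> \<longrightarrow> \<bar>Phi x - \<alpha>\<bar> \<le> C * \<bar>x - \<alpha>\<bar>^2"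
proof -
  obtain c where "eventually (\<lambda>x. \<bar>Z x - \<alpha>\<bar> \<le> c * \<bar>x - \<alpha>\<bar>^2) near_root"
    using z_err_bigo_square by (elim landau_o.bigE) (auto simp: power_abs)
  then have "eventually (\<lambda>x. Z x = Y x \<longrightarrow> \<bar>Z x - \<alpha>\<bar> \<le> c * \<bar>x - \<alpha>\<bar>^2) near_root"
    by (auto elim: eventually_mono)
  with Phi_err_bigo_square show ?thesis by (rule Phi_local_bound)
qed

lemma Phi_local_convergence:
  "\<exists>\<delta>>0. \<forall>x0. \<bar>x0 - \<alpha>\<bar> < \<delta> \<longrightarrow>
     (\<lambda>n. (Phi ^^ n) x0) \<longlonglongrightarrow> \<alpha> \<and> (\<forall>n. \<bar>(Phi ^^ n) x0 - \<alpha>\<bar> \<le> \<bar>x0 - \<alpha>\<bar>)"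
proof -
  obtain \<delta> C where "\<delta> > 0" "\<forall>x. \<bar>x - \<alpha>\<bar> < \<delta> \<longrightarrow> \<bar>Phi x - \<alpha>\<bar> \<le> C * \<bar>x - \<alpha>\<bar>^2"
    using Phi_quadratic by blast
  from quadratic_bound_imp_local_convergence[OF this] show ?thesis .
qed

end

locale optimal_weights = eighth_order_scheme +
  assumes G_0: "G (0,0) = 1"
    and G_1: "((\<lambda>t. G (t,0)) has_real_derivative 1) (at 0)"
    and G_2: "((\<lambda>t. G (0,t)) has_real_derivative 1) (at 0)"
    and H_0: "H (0,0) = 1"
    and H_1: "((\<lambda>s. H (s,0)) has_real_derivative 0) (at 0)"
    and H_2: "((\<lambda>s. H (0,s)) has_real_derivative 0) (at 0)"
begin

lemma G_targ_expansion:
  "(\<lambda>x. G (targ x) - 1 - fst (targ x) - snd (targ x)) \<in> O[near_root](\<lambda>x. (x - \<alpha>)^2)"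
proof -
  have "(\<lambda>x. fst (targ x)^2 + snd (targ x)^2) \<in> O[near_root](\<lambda>x. (x - \<alpha>)^2)"
    by (intro sum_in_bigo(1) landau_o.big_power targ_snd_bigo landau_o.big_trans[OF targ_fst_bigo w_err_bigo])
  then have "(\<lambda>x. norm (targ x)^2) \<in> O[near_root](\<lambda>x. (x - \<alpha>)^2)"
    by (simp add: norm_prod_power2)
  moreover have "(\<lambda>x. G (targ x) - G (0,0) - 1 * fst (targ x) - 1 * snd (targ x))
      \<in> O[near_root](\<lambda>x. norm (targ x)^2)"
    using landau_o.big.compose[OF smooth2_near0_linearization[OF smooth_G G_1 G_2] targ_tendsto] .
  ultimately show ?thesis using G_0 by simp (rule landau_o.big_trans)
qed

text \<open>
  Writing \<open>G = 1 + t\<^sub>1 + t\<^sub>2 + r\<^sub>G\<close>, the first-order terms of \<open>divdiff\<close>, \<open>d t\<^sub>1\<close> and \<open>d t\<^sub>2\<close>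
  cancel in \<open>A\<close>; this is where the conditions on \<open>G\<close> enter.
\<close>
lemma z_err_bigo_x3w: "(\<lambda>x. Z x - \<alpha>) \<in> O[near_root](\<lambda>x. (x - \<alpha>)^3 * (W x - \<alpha>))"
proof -
  define g where "g x = G (targ x)" for x
  define rG where "rG x = G (targ x) - 1 - fst (targ x) - snd (targ x)" for x
  have g1: "g \<in> O[near_root](\<lambda>_. 1)" using G_targ_bigo_1 by (simp add: g_def[abs_def])
  define A where "A x = (divdiff x - (d + d2 * ((x - \<alpha>) + (W x - \<alpha>)))) - (d * fst (targ x) - d2 * (W x - \<alpha>))
     - (d * snd (targ x) - d2 * (x - \<alpha>))" for x
  have A: "A \<in> O[near_root](\<lambda>x. (x - \<alpha>)^2)"
    unfolding A_def by (rule sum_in_bigo(2)[OF sum_in_bigo(2)[OF divdiff_expansion targ_fst_expansion] targ_snd_expansion])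
  have a: "(\<lambda>x. (Y x - \<alpha>) * A x) \<in> O[near_root](\<lambda>x. (x - \<alpha>)^3 * (W x - \<alpha>))"
    using landau_o.big.mult[OF y_err_bigo A] by (simp add: power2_eq_square power3_eq_cube mult_ac)
  have b: "(\<lambda>x. (f (Y x) - d * (Y x - \<alpha>)) * g x) \<in> O[near_root](\<lambda>x. (x - \<alpha>)^3 * (W x - \<alpha>))"
    using landau_o.big_1_mult[OF landau_o.big_trans[OF f_y_linear xw_err_square_bigo_x3w] g1] .
  have c: "(\<lambda>x. d * ((Y x - \<alpha>) * rG x)) \<in> O[near_root](\<lambda>x. (x - \<alpha>)^3 * (W x - \<alpha>))"
    using landau_o.big.mult[OF y_err_bigo G_targ_expansion[folded rG_def]]
    by (intro bigo_const_mult) (simp add: power2_eq_square power3_eq_cube mult_ac)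
  define N where "N x = (Y x - \<alpha>) * A x - (f (Y x) - d * (Y x - \<alpha>)) * g x - d * ((Y x - \<alpha>) * rG x)" for x
  have N: "N \<in> O[near_root](\<lambda>x. (x - \<alpha>)^3 * (W x - \<alpha>))"
    unfolding N_def by (rule sum_in_bigo(2)[OF sum_in_bigo(2)[OF a b] c])
  have q: "(\<lambda>x. N x / divdiff x) \<in> O[near_root](\<lambda>x. (x - \<alpha>)^3 * (W x - \<alpha>))"
    using bigo_divide_bigtheta[OF N divdiff_bigtheta_1] by simp
  have "eventually (\<lambda>x. Z x - \<alpha> = N x / divdiff x) near_root"
    using ev_divdiff_nonzero
  proof eventually_elim
    case (elim x)
    have "N x = (Y x - \<alpha>) * divdiff x - f (Y x) * g x"
      by (simp add: N_def A_def rG_def g_def algebra_simps)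
    then show ?case using elim by (simp add: Z_eq_secant g_def field_simps)
  qed
  then show ?thesis by (rule bigo_eventually_cong) (rule q)
qed

lemma z_err_bigo_4: "(\<lambda>x. Z x - \<alpha>) \<in> O[near_root](\<lambda>x. (x - \<alpha>)^4)"
proof -
  have "(\<lambda>x. (x - \<alpha>)^3 * (W x - \<alpha>)) \<in> O[near_root](\<lambda>x. (x - \<alpha>)^3 * (x - \<alpha>))"
    by (intro landau_o.big.mult landau_o.big_refl w_err_bigo)
  with z_err_bigo_x3w show ?thesis
    by (simp add: eval_nat_numeral mult_ac) (rule landau_o.big_trans)
qed

lemma H_sarg_expansion: "(\<lambda>x. H (sarg x) - 1) \<in> O[near_root](\<lambda>x. (x - \<alpha>)^4)"
proof -
  have fz: "(\<lambda>x. f (Z x)) \<in> O[near_root](\<lambda>x. (x - \<alpha>)^3 * (W x - \<alpha>))"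
    using landau_o.big_trans[OF f_bigo_err[OF z_tendsto] z_err_bigo_x3w] .
  have "(\<lambda>x. f (Z x) / f x) \<in> O[near_root](\<lambda>x. (x - \<alpha>)^3 * (W x - \<alpha>) / (x - \<alpha>))"
    by (rule bigo_divide_bigtheta[OF fz f_bigtheta ev_x_err_nonzero])
  moreover have "eventually (\<lambda>x. (x - \<alpha>)^3 * (W x - \<alpha>) / (x - \<alpha>) = (x - \<alpha>)^2 * (W x - \<alpha>)) near_root"
    using ev_x_err_nonzero by eventually_elim (simp add: eval_nat_numeral)
  ultimately have "(\<lambda>x. f (Z x) / f x) \<in> O[near_root](\<lambda>x. (x - \<alpha>)^2 * (W x - \<alpha>))"
    by (rule bigo_eventually_cong_bound[rotated])
  then have s1: "(\<lambda>x. f (Z x) / f x) \<in> O[near_root](\<lambda>x. (x - \<alpha>)^2)"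
    using landau_o.big_1_mult[OF landau_o.big_refl w_err_bigo_1, of "\<lambda>x. (x - \<alpha>)^2"]
    by (rule landau_o.big_trans)
  have "(\<lambda>x. f (Z x) / f (W x)) \<in> O[near_root](\<lambda>x. (x - \<alpha>)^3 * (W x - \<alpha>) / (W x - \<alpha>))"
    by (rule bigo_divide_bigtheta[OF fz f_w_bigtheta ev_w_err_nonzero])
  moreover have "eventually (\<lambda>x. (x - \<alpha>)^3 * (W x - \<alpha>) / (W x - \<alpha>) = (x - \<alpha>)^3) near_root"
    using ev_w_err_nonzero by eventually_elim simp
  ultimately have "(\<lambda>x. f (Z x) / f (W x)) \<in> O[near_root](\<lambda>x. (x - \<alpha>)^3)"
    by (rule bigo_eventually_cong_bound[rotated])
  then have s2: "(\<lambda>x. f (Z x) / f (W x)) \<in> O[near_root](\<lambda>x. (x - \<alpha>)^2)"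
    using x_err_cube_bigo by (rule landau_o.big_trans)
  have "(\<lambda>x. (f (Z x) / f x)^2 + (f (Z x) / f (W x))^2) \<in> O[near_root](\<lambda>x. ((x - \<alpha>)^2)^2)"
    by (rule sum_in_bigo(1)[OF landau_o.big_power[OF s1] landau_o.big_power[OF s2]])
  then have "(\<lambda>x. norm (sarg x)^2) \<in> O[near_root](\<lambda>x. (x - \<alpha>)^4)"
    by (simp add: norm_prod_power2 sarg_def power_mult[symmetric])
  moreover have "(\<lambda>x. H (sarg x) - H (0,0) - 0 * fst (sarg x) - 0 * snd (sarg x))
      \<in> O[near_root](\<lambda>x. norm (sarg x)^2)"
    using landau_o.big.compose[OF smooth2_near0_linearization[OF smooth_H H_1 H_2] sarg_tendsto] .
  ultimately show ?thesis using H_0 by simp (rule landau_o.big_trans)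
qed

text \<open>
  The last step is Newton's step with \<open>f'(z)\<close> replaced by \<open>\<psi>\<close> and damped by \<open>H\<close>; its error
  splits into the defect of \<open>\<psi>\<close>, the Newton error and the defect of \<open>H\<close>.
\<close>
lemma Phi_err_bigo_8: "(\<lambda>x. Phi x - \<alpha>) \<in> O[near_root_z](\<lambda>x. (x - \<alpha>)^8)"
proof -
  define p where "p x = psi f x (W x) (Y x) (Z x)" for x
  have psi_defect: "(\<lambda>x. (Z x - \<alpha>) * (p x - deriv f (Z x))) \<in> O[near_root_z](\<lambda>x. (x - \<alpha>)^8)"
  proof -
    have "(\<lambda>x. (x - \<alpha>)^2 * (W x - \<alpha>)^2) \<in> O[near_root](\<lambda>x. (x - \<alpha>)^2 * (x - \<alpha>)^2)"
      by (intro landau_o.big.mult landau_o.big_refl landau_o.big_power w_err_bigo)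
    from landau_o.big_trans[OF psi_err bigo_near_root_z[OF this]]
    have "(\<lambda>x. p x - deriv f (Z x)) \<in> O[near_root_z](\<lambda>x. (x - \<alpha>)^4)"
      by (simp add: p_def power_add[symmetric])
    from landau_o.big.mult[OF bigo_near_root_z[OF z_err_bigo_4] this] show ?thesis
      by (simp add: power_add[symmetric])
  qed
  have newton: "(\<lambda>x. (Z x - \<alpha>) * deriv f (Z x) - f (Z x)) \<in> O[near_root_z](\<lambda>x. (x - \<alpha>)^8)"
  proof -
    have "(\<lambda>x. f \<alpha> - (\<Sum>m<2. (deriv ^^ m) f (Z x) / fact m * (\<alpha> - Z x)^m))
        \<in> O[near_root](\<lambda>x. (\<alpha> - Z x)^2)"
      using taylor_bigo[of 2 Z near_root "\<lambda>_. \<alpha>"] z_tendsto by simp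
    then have "(\<lambda>x. (Z x - \<alpha>) * deriv f (Z x) - f (Z x)) \<in> O[near_root](\<lambda>x. (Z x - \<alpha>)^2)"
      by (simp add: eval_nat_numeral f_root algebra_simps power2_eq_square)
    moreover have "(\<lambda>x. (Z x - \<alpha>)^2) \<in> O[near_root](\<lambda>x. (x - \<alpha>)^8)"
      using landau_o.big_power[OF z_err_bigo_4, of 2] by (simp add: power_mult[symmetric])
    ultimately show ?thesis by (intro bigo_near_root_z) (rule landau_o.big_trans)
  qed
  have H_defect: "(\<lambda>x. f (Z x) * (1 - H (sarg x))) \<in> O[near_root_z](\<lambda>x. (x - \<alpha>)^8)"
  proof -
    have "(\<lambda>x. - (H (sarg x) - 1)) \<in> O[near_root](\<lambda>x. (x - \<alpha>)^4)"
      by (subst landau_o.big.uminus_in_iff) (rule H_sarg_expansion)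
    from landau_o.big.mult[OF landau_o.big_trans[OF f_bigo_err[OF z_tendsto] z_err_bigo_4] this]
    show ?thesis by (intro bigo_near_root_z) (simp add: power_add[symmetric])
  qed
  have p_theta: "p \<in> \<Theta>[near_root_z](\<lambda>_. 1)" using psi_bigtheta_1 by (simp add: p_def[abs_def])
  from bigo_divide_bigtheta[OF sum_in_bigo(1)[OF sum_in_bigo(1)[OF psi_defect newton] H_defect] p_theta]
  have "(\<lambda>x. ((Z x - \<alpha>) * (p x - deriv f (Z x)) + ((Z x - \<alpha>) * deriv f (Z x) - f (Z x))
      + f (Z x) * (1 - H (sarg x))) / p x) \<in> O[near_root_z](\<lambda>x. (x - \<alpha>)^8)" by simp
  moreover have "eventually (\<lambda>x. p x \<noteq> 0) near_root_z"
    using eventually_nonzero_bigtheta[OF p_theta] by simp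
  then have "eventually (\<lambda>x. Phi x - \<alpha> = ((Z x - \<alpha>) * (p x - deriv f (Z x))
      + ((Z x - \<alpha>) * deriv f (Z x) - f (Z x)) + f (Z x) * (1 - H (sarg x))) / p x) near_root_z"
    by eventually_elim (simp add: Phi_def p_def field_simps)
  ultimately show ?thesis by (rule bigo_eventually_cong[rotated])
qed

lemma ev_z_eq_y_imp_root: "eventually (\<lambda>x. Z x = Y x \<longrightarrow> Z x = \<alpha>) near_root"
proof -
  have "((\<lambda>x. G (targ x)) \<longlongrightarrow> 1) near_root"
    using isCont_tendsto_compose[OF smooth2_near0_isCont[OF smooth_G] targ_tendsto] G_0 by simp
  then have G_pos: "eventually (\<lambda>x. 0 < G (targ x)) near_root" by (rule order_tendstoD) simp
  have "eventually (\<lambda>y. f y \<noteq> 0) (at \<alpha>)"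
    using eventually_nonzero_bigtheta[OF bigthetaI_tendsto[OF d_nonzero f_div_err_tendsto]]
    by (simp add: eventually_at_filter)
  then have "eventually (\<lambda>y. y \<noteq> \<alpha> \<longrightarrow> f y \<noteq> 0) (nhds \<alpha>)" by (simp add: eventually_at_filter)
  from eventually_compose_filterlim[OF this y_tendsto]
  have "eventually (\<lambda>x. Y x \<noteq> \<alpha> \<longrightarrow> f (Y x) \<noteq> 0) near_root" .
  with G_pos ev_divdiff_nonzero show ?thesis
    by eventually_elim (auto simp: Z_eq_secant)
qed

lemma Phi_order_8: "\<exists>\<delta>>0. \<exists>C. \<forall>x. \<bar>x - \<alpha>\<bar> < \<delta> \<longrightarrow> \<bar>Phi x - \<alpha>\<bar> \<le> C * \<bar>x - \<alpha>\<bar>^8"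
  using ev_z_eq_y_imp_root
  by (intro Phi_local_bound[OF Phi_err_bigo_8, of 0]) (auto elim: eventually_mono)

lemma Phi_iterates_order_8:
  "\<exists>\<delta>>0. \<exists>C. \<forall>x0. \<bar>x0 - \<alpha>\<bar> < \<delta> \<longrightarrow>
     (\<forall>n. \<bar>(Phi ^^ Suc n) x0 - \<alpha>\<bar> \<le> C * \<bar>(Phi ^^ n) x0 - \<alpha>\<bar> ^ 8)"
proof -
  obtain \<delta> where "\<delta> > 0" and local: "\<forall>x0. \<bar>x0 - \<alpha>\<bar> < \<delta> \<longrightarrow> (\<forall>n. \<bar>(Phi ^^ n) x0 - \<alpha>\<bar> \<le> \<bar>x0 - \<alpha>\<bar>)"
    using Phi_local_convergence by blast
  obtain \<delta>8 C where "\<delta>8 > 0" and order8: "\<forall>x. \<bar>x - \<alpha>\<bar> < \<delta>8 \<longrightarrow> \<bar>Phi x - \<alpha>\<bar> \<le> C * \<bar>x - \<alpha>\<bar>^8"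
    using Phi_order_8 by blast
  have "\<bar>(Phi ^^ Suc n) x0 - \<alpha>\<bar> \<le> C * \<bar>(Phi ^^ n) x0 - \<alpha>\<bar> ^ 8"
    if x0: "\<bar>x0 - \<alpha>\<bar> < min \<delta> \<delta>8" for x0 n
  proof -
    have "\<bar>(Phi ^^ n) x0 - \<alpha>\<bar> \<le> \<bar>x0 - \<alpha>\<bar>" using local x0 by simp
    with x0 have "\<bar>(Phi ^^ n) x0 - \<alpha>\<bar> < \<delta>8" by linarith
    with order8 show ?thesis by simp
  qed
  moreover have "min \<delta> \<delta>8 > 0" using \<open>\<delta> > 0\<close> \<open>\<delta>8 > 0\<close> by simp
  ultimately show ?thesis by blast
qed

end

theorem theorem1:
  fixes D :: "real set" and f :: "real \<Rightarrow> real" and \<alpha> \<kappa> :: real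
    and G H :: "real \<times> real \<Rightarrow> real"
  assumes "open D" and "is_interval D" and "\<alpha> \<in> D"
    and "smooth_real_on D f"
    and "f \<alpha> = 0" and "deriv f \<alpha> \<noteq> 0"
    and "\<kappa> \<noteq> 0"
    and "smooth2_near0 G" and "smooth2_near0 H"
  shows "(\<exists>\<delta>>0. \<forall>x0. \<bar>x0 - \<alpha>\<bar> < \<delta> \<longrightarrow> iterates \<kappa> f G H x0 \<longlonglongrightarrow> \<alpha>)
       \<and> ((G (0,0) = 1
           \<and> ((\<lambda>t. G (t,0)) has_real_derivative 1) (at 0)
           \<and> ((\<lambda>t. G (0,t)) has_real_derivative 1) (at 0)
           \<and> H (0,0) = 1
           \<and> ((\<lambda>s. H (s,0)) has_real_derivative 0) (at 0)
           \<and> ((\<lambda>s. H (0,s)) has_real_derivative 0) (at 0))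
          \<longrightarrow> (\<exists>\<delta>>0. \<forall>x0. \<bar>x0 - \<alpha>\<bar> < \<delta> \<longrightarrow>
                 (\<exists>C N. \<forall>n\<ge>N. \<bar>iterates \<kappa> f G H x0 (Suc n) - \<alpha>\<bar>
                                 \<le> C * \<bar>iterates \<kappa> f G H x0 n - \<alpha>\<bar> ^ 8)))"
proof -
  interpret eighth_order_scheme D f \<alpha> \<kappa> G H
    using assms(1,3-9) by unfold_locales
  have iterates: "iterates \<kappa> f G H x0 = (\<lambda>n. (Phi ^^ n) x0)" for x0
    by (simp add: fun_eq_iff iterates_def step_eq_Phi)
  have order8: "\<exists>\<delta>>0. \<exists>C. \<forall>x0. \<bar>x0 - \<alpha>\<bar> < \<delta> \<longrightarrow>
      (\<forall>n. \<bar>(Phi ^^ Suc n) x0 - \<alpha>\<bar> \<le> C * \<bar>(Phi ^^ n) x0 - \<alpha>\<bar> ^ 8)"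
    if "G (0,0) = 1 \<and> ((\<lambda>t. G (t,0)) has_real_derivative 1) (at 0)
      \<and> ((\<lambda>t. G (0,t)) has_real_derivative 1) (at 0) \<and> H (0,0) = 1
      \<and> ((\<lambda>s. H (s,0)) has_real_derivative 0) (at 0) \<and> ((\<lambda>s. H (0,s)) has_real_derivative 0) (at 0)"
  proof -
    interpret optimal_weights D f \<alpha> \<kappa> G H using that by unfold_locales auto
    show ?thesis by (rule Phi_iterates_order_8)
  qed
  show ?thesis
    unfolding iterates using Phi_local_convergence order8 by blast
qed

end
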